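(* For every integer $n \geq 4$, \[ \overline{\theta}(K_n) \geq \max_{x \in \mathbb{Z},\ 1\leq x \leq n/2}\frac{\binom{n}{2} - 2\binom{x}{2}-3}{3n-2x-7}. \] Moreover, for every integer $n\geq 12$, \[ \overline{\theta}(K_n) \geq \left\lceil \frac{3-\sqrt{7}}{2}\, n +0.342\right\rceil \geq \left\lceil\frac{n}{5.646} + 0.342\right\rceil. \]
   Context: The geometric thickness $\overline{\theta}(G)$ of a graph $G$ is the smallest integer $k$ such that there is an injective placement of the vertices of $G$ at points of the plane, with each edge drawn as the straight line segment between the points of its endpoints and containing no other vertex point, together with an assignment of each edge to one of $k$ layers, such that no two edges assigned to the same layer cross (i.e., two edges in the same layer meet at most in a common endpoint). $K_n$ denotes the complete graph on $n$ vertices. *)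

theory Defs
  imports "HOL-Analysis.Analysis"
begin

definition geometric_drawing :: "'a set \<Rightarrow> 'a set set \<Rightarrow> nat \<Rightarrow> bool" where
  "geometric_drawing V E k \<longleftrightarrow>
     (\<exists>(p :: 'a \<Rightarrow> real^2) (c :: 'a set \<Rightarrow> nat).
        inj_on p V \<and>
        (\<forall>a b v. {a, b} \<in> E \<longrightarrow> v \<in> V \<longrightarrow> v \<noteq> a \<longrightarrow> v \<noteq> b \<longrightarrow>
           p v \<notin> closed_segment (p a) (p b)) \<and>
        (\<forall>e\<in>E. c e < k) \<and>
        (\<forall>a b a' b'. {a, b} \<in> E \<longrightarrow> {a', b'} \<in> E \<longrightarrow> {a, b} \<noteq> {a', b'} \<longrightarrow>
           c {a, b} = c {a', b'} \<longrightarrow>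
           closed_segment (p a) (p b) \<inter> closed_segment (p a') (p b')
             \<subseteq> p ` ({a, b} \<inter> {a', b'})))"

definition geometric_thickness :: "'a set \<Rightarrow> 'a set set \<Rightarrow> nat" where
  "geometric_thickness V E = (LEAST k. geometric_drawing V E k)"

definition complete_graph_edges :: "nat \<Rightarrow> nat set set" where
  "complete_graph_edges n = {{i, j} | i j. i < n \<and> j < n \<and> i \<noteq> j}"

definition thickness_K :: "nat \<Rightarrow> nat" where
  "thickness_K n = geometric_thickness {..<n} (complete_graph_edges n)"

end

theory Submission
  imports Defs "HOL-Library.Sublist"
begin

fun changes :: "'a list \<Rightarrow> nat" where
  "changes [] = 0"
| "changes [x] = 0"
| "changes (x # y # xs) = (if x = y then 0 else 1) + changes (y # xs)"

lemma changes_Cons: "changes (x # xs) = (if xs \<noteq> [] \<and> x \<noteq> hd xs then 1 else 0) + changes xs"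
  by (cases xs) auto

lemma changes_append:
  "changes (xs @ ys) = changes xs + changes ys + (if xs \<noteq> [] \<and> ys \<noteq> [] \<and> last xs \<noteq> hd ys then 1 else 0)"
  by (induction xs rule: changes.induct) (auto simp: changes_Cons)

lemma changes_append_ge: "changes xs + changes ys \<le> changes (xs @ ys)"
  by (simp add: changes_append)

lemma changes_append_le: "changes (xs @ ys) \<le> changes xs + changes ys + 1"
  by (simp add: changes_append)

lemma changes_replicate [simp]: "changes (replicate m a) = 0"
proof (induction m)
  case (Suc m)
  then show ?case by (cases m) auto
qed simp

lemma length_le_Suc_changes: "distinct xs \<Longrightarrow> length xs \<le> Suc (changes xs)"
  by (induction xs rule: changes.induct) auto

lemma length_le_changes_fst_snd:
  "distinct xs \<Longrightarrow> length xs \<le> 1 + changes (map fst xs) + changes (map snd xs)"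
proof (induction xs rule: changes.induct)
  case (3 x y xs)
  then have "fst x \<noteq> fst y \<or> snd x \<noteq> snd y" by (auto simp: prod_eq_iff)
  with 3 show ?case by auto
qed auto

lemma changes_remove_block: "changes (xs @ replicate m a @ ys) \<le> changes (xs @ ys) + 2"
  using changes_append_le[of xs "replicate m a @ ys"] changes_append_le[of "replicate m a" ys]
    changes_append_ge[of xs ys] by simp

lemma changes_replace_block:
  assumes "distinct zs"
  shows "changes (xs @ replicate m a @ ys) + length zs \<le> changes (xs @ zs @ ys) + 3"
proof (cases "zs = []")
  case True
  then show ?thesis using changes_remove_block[of xs m a ys] by simp
next
  case False
  then show ?thesis
    using length_le_Suc_changes[OF assms]
      changes_append_le[of xs "replicate m a @ ys"] changes_append_le[of "replicate m a" ys]
      changes_append_ge[of xs "zs @ ys"] changes_append_ge[of zs ys]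
    by simp
qed

lemma changes_replace_final_block:
  assumes "distinct zs"
  shows "changes (xs @ replicate m a) + length zs \<le> changes (xs @ zs) + 2"
  using length_le_Suc_changes[OF assms] changes_append_le[of xs "replicate m a"]
    changes_append_ge[of xs zs] by (cases "zs = []") auto

definition abab_free :: "'a list \<Rightarrow> bool" where
  "abab_free xs \<longleftrightarrow> (\<forall>a b. a \<noteq> b \<longrightarrow> \<not> subseq [a, b, a, b] xs)"

lemma abab_free_subseq: "abab_free ys \<Longrightarrow> subseq xs ys \<Longrightarrow> abab_free xs"
  unfolding abab_free_def using subseq_order.order_trans by blast

lemma split_list_last_new:
  "xs \<noteq> [] \<Longrightarrow> \<exists>ys a zs. xs = ys @ a # zs \<and> a \<notin> set ys \<and> set zs \<subseteq> insert a (set ys)"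
proof (induction xs rule: rev_induct)
  case (snoc y xs)
  show ?case
  proof (cases "xs \<noteq> [] \<and> y \<in> set xs")
    case True
    then obtain ys a zs where "xs = ys @ a # zs" "a \<notin> set ys" "set zs \<subseteq> insert a (set ys)"
      using snoc.IH by blast
    with True show ?thesis by (intro exI[of _ ys] exI[of _ a] exI[of _ "zs @ [y]"]) auto
  next
    case False
    then show ?thesis by (intro exI[of _ xs] exI[of _ y] exI[of _ "[]"]) auto
  qed
qed simp

lemma abab_free_after_last_new:
  assumes "abab_free (ys @ a # zs)" "set zs \<subseteq> insert a (set ys)"
  shows "\<exists>m vs. zs = replicate m a @ vs \<and> a \<notin> set vs"
proof -
  define vs where "vs = dropWhile (\<lambda>y. y = a) zs"
  define m where "m = length (takeWhile (\<lambda>y. y = a) zs)"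
  have zs: "zs = replicate m a @ vs"
    unfolding m_def vs_def by (metis (mono_tags) replicate_length_same set_takeWhileD takeWhile_dropWhile_id)
  have "a \<notin> set vs"
  proof
    assume "a \<in> set vs"
    then obtain b vs' where vs': "vs = b # vs'" by (cases vs) auto
    have "b \<noteq> a" using hd_dropWhile[of "\<lambda>y. y = a" zs] vs' unfolding vs_def by (metis list.discI list.sel(1))
    moreover have "b \<in> set ys" using assms(2) zs vs' \<open>b \<noteq> a\<close> by auto
    moreover have "a \<in> set vs'" using \<open>a \<in> set vs\<close> vs' \<open>b \<noteq> a\<close> by auto
    ultimately obtain ys1 ys2 vs1 vs2 where "ys = ys1 @ b # ys2" "vs' = vs1 @ a # vs2"
      by (meson split_list)
    then have "subseq [b, a, b, a] (ys @ a # zs)"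
      using zs vs' by (simp add: list_emb_append2)
    with assms(1) \<open>b \<noteq> a\<close> show False unfolding abab_free_def by blast
  qed
  with zs show ?thesis by blast
qed

text \<open>Davenport--Schinzel bound for order 2.\<close>
lemma abab_free_changes:
  "abab_free xs \<Longrightarrow> xs \<noteq> [] \<Longrightarrow> changes xs + 2 \<le> 2 * card (set xs)"
proof (induction "card (set xs)" arbitrary: xs rule: less_induct)
  case less
  obtain ys a zs where xs: "xs = ys @ a # zs" "a \<notin> set ys" "set zs \<subseteq> insert a (set ys)"
    using split_list_last_new[OF less.prems(2)] by blast
  have "abab_free (ys @ a # zs)" using less.prems(1) xs(1) by simp
  from abab_free_after_last_new[OF this xs(3)]
  obtain m vs where zs: "zs = replicate m a @ vs" "a \<notin> set vs" by blast
  have xs': "xs = ys @ replicate (Suc m) a @ vs" using xs(1) zs(1) by simp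
  have "set (ys @ vs) = set xs - {a}" using xs' xs(2) zs(2) by auto
  moreover have "a \<in> set xs" using xs(1) by simp
  ultimately have card_del: "card (set (ys @ vs)) = card (set xs) - 1" "card (set xs) \<ge> 1"
    by (simp, metis Suc_leI card_gt_0_iff empty_iff finite_set One_nat_def)
  have changes_del: "changes xs \<le> changes (ys @ vs) + 2"
    unfolding xs' by (rule changes_remove_block)
  show ?case
  proof (cases "ys @ vs = []")
    case True
    then have "xs = replicate (Suc m) a" using xs' by simp
    then show ?thesis using card_del(2) by (simp del: replicate_Suc)
  next
    case False
    have "subseq (ys @ vs) xs" unfolding xs' subseq_append' by (intro list_emb_append2 subseq_order.order_refl)
    then have "changes (ys @ vs) + 2 \<le> 2 * card (set (ys @ vs))"
      using less.hyps[of "ys @ vs"] card_del False abab_free_subseq[OF less.prems(1)] by simp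
    then show ?thesis using changes_del card_del by linarith
  qed
qed

lemma sorted_wrt_subseq: "subseq xs ys \<Longrightarrow> sorted_wrt R ys \<Longrightarrow> sorted_wrt R xs"
  by (induction rule: list_emb.induct) (auto dest: list_emb_set)

lemma subseq_map_right:
  assumes "subseq xs (map f ys)"
  obtains zs where "subseq zs ys" "xs = map f zs"
proof -
  obtain N where "xs = nths (map f ys) N" using assms by (auto simp: subseq_conv_nths)
  then show thesis using that[of "nths ys N"] by (auto simp: nths_map subseq_conv_nths)
qed

lemma sorted_wrt_sort_key:
  assumes "distinct xs" "inj_on h (set xs)"
  shows "sorted_wrt (\<lambda>a b. h a < h b) (sort_key h xs)"
  using assms by (simp flip: sorted_wrt_map add: strict_sorted_iff distinct_map)

lemma sorted_wrt_key_unique: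
  fixes h :: "'a \<Rightarrow> 'b::linorder"
  assumes "sorted_wrt (\<lambda>a b. h a < h b) xs" "sorted_wrt (\<lambda>a b. h a < h b) ys" "set xs = set ys"
  shows "xs = ys"
proof -
  have strict: "sorted_wrt (<) (map h xs)" "sorted_wrt (<) (map h ys)"
    using assms(1,2) by (simp_all add: sorted_wrt_map)
  then have "map h xs = map h ys"
    using assms(3) by (simp add: strict_sorted_iff sorted_distinct_set_unique)
  moreover have "inj_on h (set xs \<union> set ys)"
    using strict assms(3) by (simp add: strict_sorted_iff distinct_map)
  ultimately show ?thesis by (simp add: inj_on_map_eq_map)
qed

lemma sorted_wrt_key_take:
  fixes h :: "'a \<Rightarrow> 'b::linorder"
  assumes "sorted_wrt (\<lambda>a b. h a < h b) xs" "i < length xs"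
  shows "{a \<in> set xs. h a < h (xs ! i)} = set (take i xs)"
proof -
  have "h (xs ! j) < h (xs ! i) \<longleftrightarrow> j < i" if "j < length xs" for j
    using sorted_wrt_nth_less[OF assms(1)] assms(2) that
    by (metis linorder_neqE_nat order.asym order.irrefl)
  then have "{a \<in> set xs. h a < h (xs ! i)} = nth xs ` {0..<i}"
    using assms(2) by (auto simp: in_set_conv_nth) (use order.strict_trans in blast)
  then show ?thesis using assms(2) by (simp add: nth_image)
qed

lemma sorted_wrt_key_levels:
  fixes h :: "'a \<Rightarrow> 'b::linorder" and lv :: "'a \<Rightarrow> nat"
  assumes "sorted_wrt (\<lambda>a b. h a < h b) xs"
    and "\<And>a. a \<in> set xs \<Longrightarrow> lv a \<le> 2"
    and "\<And>a b. a \<in> set xs \<Longrightarrow> b \<in> set xs \<Longrightarrow> lv a < lv b \<Longrightarrow> h a < h b"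
  shows "xs = filter (\<lambda>a. lv a = 0) xs @ filter (\<lambda>a. lv a = 1) xs @ filter (\<lambda>a. lv a = 2) xs"
proof (rule sorted_wrt_key_unique[OF assms(1)])
  show "sorted_wrt (\<lambda>a b. h a < h b)
     (filter (\<lambda>a. lv a = 0) xs @ filter (\<lambda>a. lv a = 1) xs @ filter (\<lambda>a. lv a = 2) xs)"
    using assms(1,3) by (auto simp: sorted_wrt_append intro: sorted_wrt_filter)
  show "set xs = set (filter (\<lambda>a. lv a = 0) xs @ filter (\<lambda>a. lv a = 1) xs @ filter (\<lambda>a. lv a = 2) xs)"
    using assms(2) by force
qed

lemma affine_sign_change:
  fixes A B s t :: real
  assumes "A + B * s < 0" "A + B * t > 0"
  obtains r where "r \<in> {min s t<..<max s t}" "A + B * r = 0"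
proof -
  have "B \<noteq> 0" using assms by auto
  then have "A + B * (- A / B) = 0" by simp
  moreover have "- A / B \<in> {min s t<..<max s t}"
  proof (cases "B > 0")
    case True
    then have "s < - A / B" "- A / B < t" using assms by (simp_all add: field_simps)
    then show ?thesis by simp
  next
    case False
    then have "B < 0" using \<open>B \<noteq> 0\<close> by simp
    then have "t < - A / B" "- A / B < s" using assms by (simp_all add: field_simps)
    then show ?thesis by simp
  qed
  ultimately show thesis using that by blast
qed

locale sweep_frame =
  fixes P :: "nat \<Rightarrow> real^2" and n :: nat and u w :: "real^2"
  assumes abscissa_strict_mono: "strict_mono_on {..<n} (\<lambda>i. u \<bullet> P i)"
    and coordinates_inj: "\<And>z z'. u \<bullet> z = u \<bullet> z' \<Longrightarrow> w \<bullet> z = w \<bullet> z' \<Longrightarrow> z = z'"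
    and no_vertex_on_segment: "\<And>i j m. i < n \<Longrightarrow> j < n \<Longrightarrow> m < n \<Longrightarrow> m \<noteq> i \<Longrightarrow> m \<noteq> j \<Longrightarrow>
      P m \<notin> closed_segment (P i) (P j)"
begin

definition X :: "nat \<Rightarrow> real" where "X k = u \<bullet> P k"
definition Y :: "nat \<Rightarrow> real" where "Y k = w \<bullet> P k"

definition edge :: "nat \<times> nat \<Rightarrow> bool" where
  "edge e \<longleftrightarrow> fst e < snd e \<and> snd e < n"

definition span :: "nat \<times> nat \<Rightarrow> real set" where
  "span e = {X (fst e)..X (snd e)}"

definition open_span :: "nat \<times> nat \<Rightarrow> real set" where
  "open_span e = {X (fst e)<..<X (snd e)}"

definition tau :: "nat \<Rightarrow> real" where
  "tau g = (X g + X (Suc g)) / 2"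

definition lam :: "nat \<times> nat \<Rightarrow> real \<Rightarrow> real" where
  "lam e t = (t - X (fst e)) / (X (snd e) - X (fst e))"

definition pt :: "nat \<times> nat \<Rightarrow> real \<Rightarrow> real^2" where
  "pt e t = P (fst e) + lam e t *\<^sub>R (P (snd e) - P (fst e))"

definition ht :: "nat \<times> nat \<Rightarrow> real \<Rightarrow> real" where
  "ht e t = Y (fst e) + lam e t * (Y (snd e) - Y (fst e))"

lemma X_less_iff [simp]: "i < n \<Longrightarrow> j < n \<Longrightarrow> X i < X j \<longleftrightarrow> i < j"
  unfolding X_def using strict_mono_on_less[OF abscissa_strict_mono] by simp

lemma X_le_iff [simp]: "i < n \<Longrightarrow> j < n \<Longrightarrow> X i \<le> X j \<longleftrightarrow> i \<le> j"
  unfolding X_def using strict_mono_on_less_eq[OF abscissa_strict_mono] by simp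

lemma X_eq_iff [simp]: "i < n \<Longrightarrow> j < n \<Longrightarrow> X i = X j \<longleftrightarrow> i = j"
  unfolding X_def using strict_mono_on_eq[OF abscissa_strict_mono] by simp

lemma edge_X_less: "edge e \<Longrightarrow> X (fst e) < X (snd e)"
  by (simp add: edge_def)

lemma u_pt: "edge e \<Longrightarrow> u \<bullet> pt e t = t"
proof -
  assume "edge e"
  then have "X (snd e) - X (fst e) \<noteq> 0" using edge_X_less by fastforce
  moreover have "u \<bullet> pt e t = X (fst e) + lam e t * (X (snd e) - X (fst e))"
    by (simp add: pt_def X_def inner_add_right inner_diff_right)
  ultimately show ?thesis by (simp add: lam_def)
qed

lemma w_pt: "w \<bullet> pt e t = ht e t"
  by (simp add: pt_def ht_def Y_def inner_add_right inner_diff_right)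

lemma pt_eqI: "edge e \<Longrightarrow> u \<bullet> z = t \<Longrightarrow> w \<bullet> z = ht e t \<Longrightarrow> z = pt e t"
  using coordinates_inj u_pt w_pt by metis

lemma pt_fst: "edge e \<Longrightarrow> pt e (X (fst e)) = P (fst e)"
  and pt_snd: "edge e \<Longrightarrow> pt e (X (snd e)) = P (snd e)"
  using edge_X_less[of e] by (auto simp: pt_def lam_def)

lemma ht_fst: "edge e \<Longrightarrow> ht e (X (fst e)) = Y (fst e)"
  and ht_snd: "edge e \<Longrightarrow> ht e (X (snd e)) = Y (snd e)"
  using edge_X_less[of e] by (auto simp: ht_def lam_def)

lemma ht_affine: "\<exists>A B. \<forall>t. ht e t = A + B * t"
proof -
  define B where "B = (Y (snd e) - Y (fst e)) / (X (snd e) - X (fst e))"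
  have "lam e t * (Y (snd e) - Y (fst e)) = (t - X (fst e)) * B" for t
    by (simp add: lam_def B_def)
  then have "ht e t = (Y (fst e) - X (fst e) * B) + B * t" for t
    unfolding ht_def by (simp add: algebra_simps)
  then show ?thesis by blast
qed

lemma pt_between:
  assumes "edge e" "t1 \<le> t2" "t2 \<le> t3"
  shows "pt e t2 \<in> closed_segment (pt e t1) (pt e t3)"
proof (cases "t1 = t3")
  case False
  define mu where "mu = (t2 - t1) / (t3 - t1)"
  have mu: "0 \<le> mu" "mu \<le> 1" using assms False by (auto simp: mu_def field_simps)
  have "mu * (t3 - t1) = t2 - t1" using False by (simp add: mu_def)
  then have t2: "t2 = (1 - mu) * t1 + mu * t3" by (simp add: algebra_simps)
  have lam: "lam e t2 = (1 - mu) * lam e t1 + mu * lam e t3"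
    using edge_X_less[OF assms(1)] unfolding lam_def t2
    by (simp add: divide_simps) (simp add: algebra_simps)
  have "pt e t2 = (1 - mu) *\<^sub>R pt e t1 + mu *\<^sub>R pt e t3"
    unfolding pt_def lam by (simp add: algebra_simps)
  with mu show ?thesis unfolding in_segment by blast
qed (use assms in simp)

lemma pt_in_segment:
  "edge e \<Longrightarrow> t \<in> span e \<Longrightarrow> pt e t \<in> closed_segment (P (fst e)) (P (snd e))"
  using pt_between[of e "X (fst e)" t "X (snd e)"] by (simp add: span_def pt_fst pt_snd)

lemma vertex_off_line:
  assumes e: "edge e" and m: "m < n" "m \<noteq> fst e" "m \<noteq> snd e"
  shows "ht e (X m) \<noteq> Y m"
proof
  assume "ht e (X m) = Y m"
  then have Pm: "pt e (X m) = P m" using pt_eqI[OF e] by (simp add: X_def Y_def)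
  have en: "fst e < n" "snd e < n" using e by (auto simp: edge_def)
  consider "X m < X (fst e)" | "X m \<in> span e" | "X (snd e) < X m"
    by (force simp: span_def)
  then show False
  proof cases
    case 1
    then have "P (fst e) \<in> closed_segment (P m) (P (snd e))"
      using pt_between[OF e, of "X m" "X (fst e)" "X (snd e)"] edge_X_less[OF e]
      by (simp add: Pm pt_fst[OF e] pt_snd[OF e])
    then show False using no_vertex_on_segment[of m "snd e" "fst e"] m en e by (auto simp: edge_def)
  next
    case 2
    then show False using pt_in_segment[OF e] no_vertex_on_segment[of "fst e" "snd e" m] m en Pm by metis
  next
    case 3
    then have "P (snd e) \<in> closed_segment (P (fst e)) (P m)"
      using pt_between[OF e, of "X (fst e)" "X (snd e)" "X m"] edge_X_less[OF e]
      by (simp add: Pm pt_fst[OF e] pt_snd[OF e])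
    then show False using no_vertex_on_segment[of "fst e" m "snd e"] m en e by (auto simp: edge_def)
  qed
qed

lemma below_highest_vertex:
  assumes e: "edge e" "fst e < x" "x < snd e" and highest: "\<forall>m<n. m \<noteq> x \<longrightarrow> Y m < Y x"
  shows "ht e (X x) < Y x"
proof -
  have xn: "x < n" using e by (auto simp: edge_def)
  have l: "0 < lam e (X x)" "lam e (X x) < 1"
    using e xn by (auto simp: lam_def edge_def field_simps)
  have "Y (fst e) < Y x" "Y (snd e) < Y x" using highest e by (auto simp: edge_def)
  then have "(1 - lam e (X x)) * Y (fst e) + lam e (X x) * Y (snd e) < (1 - lam e (X x)) * Y x + lam e (X x) * Y x"
    using l by (intro add_strict_mono mult_strict_left_mono) auto
  then show ?thesis by (simp add: ht_def algebra_simps)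
qed

definition noncrossing :: "(nat \<times> nat) set \<Rightarrow> bool" where
  "noncrossing G \<longleftrightarrow> (\<forall>e\<in>G. edge e) \<and>
     (\<forall>i j i' j'. (i, j) \<in> G \<longrightarrow> (i', j') \<in> G \<longrightarrow> (i, j) \<noteq> (i', j') \<longrightarrow>
        closed_segment (P i) (P j) \<inter> closed_segment (P i') (P j') \<subseteq> P ` ({i, j} \<inter> {i', j'}))"

end

locale noncrossing_sweep = sweep_frame +
  fixes G :: "(nat \<times> nat) set"
  assumes noncrossing_G: "noncrossing G"
begin

lemma G_edge: "e \<in> G \<Longrightarrow> edge e"
  using noncrossing_G by (simp add: noncrossing_def)

lemma G_fst_less_snd: "e \<in> G \<Longrightarrow> fst e < snd e"
  and G_snd_less: "e \<in> G \<Longrightarrow> snd e < n"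
  using G_edge by (auto simp: edge_def)

lemma finite_G: "finite G"
  by (rule finite_subset[of _ "{..<n} \<times> {..<n}"]) (auto simp: edge_def dest: G_edge)

lemma heights_differ:
  assumes "e \<in> G" "f \<in> G" "e \<noteq> f" "t \<in> open_span e" "t \<in> open_span f"
  shows "ht e t \<noteq> ht f t"
proof
  assume eq: "ht e t = ht f t"
  have ee: "edge e" "edge f" using assms G_edge by auto
  have z: "pt e t = pt f t" using pt_eqI[OF ee(2)] u_pt[OF ee(1)] w_pt eq by metis
  have "t \<in> span e" "t \<in> span f" using assms(4,5) by (auto simp: span_def open_span_def)
  then have "pt e t \<in> closed_segment (P (fst e)) (P (snd e))"
    and "pt f t \<in> closed_segment (P (fst f)) (P (snd f))"
    using pt_in_segment ee by auto
  then have "pt e t \<in> closed_segment (P (fst e)) (P (snd e)) \<inter> closed_segment (P (fst f)) (P (snd f))"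
    using z by simp
  then have "pt e t \<in> P ` ({fst e, snd e} \<inter> {fst f, snd f})"
    using noncrossing_G assms(1-3) unfolding noncrossing_def by (metis prod.collapse subsetD)
  then obtain m where "m \<in> {fst e, snd e}" "pt e t = P m" by auto
  moreover from this have "t = X m" using u_pt[OF ee(1), of t] by (simp add: X_def)
  ultimately show False using assms(4) by (auto simp: open_span_def)
qed

lemma height_order_persists:
  assumes "e \<in> G" "f \<in> G" "s \<in> span e \<inter> span f" "t \<in> span e \<inter> span f" "ht e t < ht f t"
  shows "ht e s \<le> ht f s"
proof (rule ccontr)
  assume "\<not> ht e s \<le> ht f s"
  have ee: "edge e" "edge f" using assms G_edge by auto
  obtain A B where AB: "\<forall>t. ht e t = A + B * t" using ht_affine[of e] by blast
  obtain A' B' where AB': "\<forall>t. ht f t = A' + B' * t" using ht_affine[of f] by blast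
  have "(A - A') + (B - B') * t < 0" "(A - A') + (B - B') * s > 0"
    using \<open>\<not> ht e s \<le> ht f s\<close> assms(5) AB AB' by (auto simp: algebra_simps)
  then obtain r where r: "r \<in> {min t s<..<max t s}" "(A - A') + (B - B') * r = 0"
    by (rule affine_sign_change)
  then have "ht e r = ht f r" using AB AB' by (auto simp: algebra_simps)
  moreover have "r \<in> open_span e" "r \<in> open_span f"
    using r(1) assms(3,4) by (auto simp: span_def open_span_def)
  ultimately show False using heights_differ[OF assms(1,2)] assms(5) by force
qed

lemma height_order_strict:
  assumes "e \<in> G" "f \<in> G" "s \<in> span e \<inter> span f" "t \<in> open_span e \<inter> open_span f" "ht e s < ht f s"
  shows "ht e t < ht f t"
proof -
  have "e \<noteq> f" using assms(5) by auto
  then have "ht e t \<noteq> ht f t" using heights_differ assms by auto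
  moreover have "t \<in> span e \<inter> span f" using assms(4) by (auto simp: span_def open_span_def)
  then have "\<not> ht f t < ht e t"
    using height_order_persists[of f e s t] assms by (auto simp: Int_commute)
  ultimately show ?thesis by simp
qed

lemma no_pinch:
  assumes "e \<in> G" "f \<in> G" "e' \<in> G" "t \<in> span e \<inter> span f \<inter> span e'"
    "ht e t < ht f t" "ht f t < ht e' t"
    "a \<in> {fst e, snd e}" "a \<in> {fst e', snd e'}" "X a \<in> open_span f"
  shows False
proof -
  have ee: "edge e" "edge f" "edge e'" using assms G_edge by auto
  have a: "X a \<in> span e" "X a \<in> span e'" "X a \<in> span f" "a < n"
    using assms(7-9) ee by (auto simp: span_def open_span_def edge_def)
  have "ht e (X a) = Y a" "ht e' (X a) = Y a"
    using assms(7,8) ht_fst[OF ee(1)] ht_snd[OF ee(1)] ht_fst[OF ee(3)] ht_snd[OF ee(3)] by auto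
  moreover have "ht e (X a) \<le> ht f (X a)" "ht f (X a) \<le> ht e' (X a)"
    using height_order_persists[of e f "X a" t] height_order_persists[of f e' "X a" t] assms a
    by auto
  ultimately have "ht f (X a) = Y a" by simp
  moreover have "a \<noteq> fst f" "a \<noteq> snd f" using assms(9) by (auto simp: open_span_def)
  ultimately show False using vertex_off_line[OF ee(2) a(4)] by simp
qed

end

context noncrossing_sweep
begin

definition gap_edges :: "nat \<Rightarrow> (nat \<times> nat) set" where
  "gap_edges g = {e \<in> G. fst e \<le> g \<and> g < snd e}"

definition gap_list :: "nat \<Rightarrow> (nat \<times> nat) list" where
  "gap_list g = sort_key (\<lambda>e. ht e (tau g)) (filter (\<lambda>e. e \<in> gap_edges g) (List.product [0..<n] [0..<n]))"

definition out_degree :: "nat \<Rightarrow> nat" where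
  "out_degree k = card {e \<in> G. fst e = k}"

lemma tau_in_open_span:
  assumes "Suc g < n" "e \<in> gap_edges g"
  shows "tau g \<in> open_span e"
proof -
  have "fst e \<le> g" "Suc g \<le> snd e" "snd e < n"
    using assms G_edge[of e] by (auto simp: gap_edges_def edge_def)
  then have "X (fst e) \<le> X g" "X g < X (Suc g)" "X (Suc g) \<le> X (snd e)"
    using assms(1) by simp_all
  then show ?thesis by (simp add: open_span_def tau_def)
qed

lemma set_gap_list: "set (gap_list g) = gap_edges g"
  by (auto simp: gap_list_def gap_edges_def edge_def dest: G_edge)

lemma distinct_gap_list: "distinct (gap_list g)"
  by (simp add: gap_list_def distinct_product)

lemma length_gap_list: "length (gap_list g) = card (gap_edges g)"
  using distinct_card[OF distinct_gap_list] by (simp add: set_gap_list)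

lemma sorted_gap_list:
  assumes "Suc g < n"
  shows "sorted_wrt (\<lambda>a b. ht a (tau g) < ht b (tau g)) (gap_list g)"
  unfolding gap_list_def
proof (rule sorted_wrt_sort_key)
  show "inj_on (\<lambda>e. ht e (tau g)) (set (filter (\<lambda>e. e \<in> gap_edges g) (List.product [0..<n] [0..<n])))"
    using heights_differ tau_in_open_span[OF assms] by (fastforce simp: inj_on_def gap_edges_def)
qed (simp add: distinct_product)

lemma abab_free_gap_list:
  assumes g: "Suc g < n" and f: "f = fst \<or> f = snd"
  shows "abab_free (map f (gap_list g))"
  unfolding abab_free_def
proof (intro allI impI notI)
  fix a b assume "a \<noteq> b" "subseq [a, b, a, b] (map f (gap_list g))"
  from this(2) obtain es where es: "subseq es (gap_list g)" "[a, b, a, b] = map f es"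
    by (rule subseq_map_right)
  obtain e1 e2 e3 e4 where e: "es = [e1, e2, e3, e4]" "f e1 = a" "f e2 = b" "f e3 = a" "f e4 = b"
    using es(2) by (auto simp: Cons_eq_map_conv)
  have sorted: "ht e1 (tau g) < ht e2 (tau g)" "ht e2 (tau g) < ht e3 (tau g)" "ht e3 (tau g) < ht e4 (tau g)"
    using sorted_wrt_subseq[OF es(1) sorted_gap_list[OF g]] unfolding e(1) by simp_all
  have "set es \<subseteq> gap_edges g" using es(1) set_gap_list by (auto dest: list_emb_set)
  then have gap: "e1 \<in> gap_edges g" "e2 \<in> gap_edges g" "e3 \<in> gap_edges g" "e4 \<in> gap_edges g"
    unfolding e(1) by simp_all
  have span: "tau g \<in> span e" if "e \<in> gap_edges g" for e
    using tau_in_open_span[OF g that] by (auto simp: span_def open_span_def)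
  have in_G: "e \<in> G" "fst e \<le> g" "g < snd e" "snd e < n" if "e \<in> gap_edges g" for e
    using that G_edge by (auto simp: gap_edges_def edge_def)
  have "fst e2 < a \<and> a < snd e2 \<or> fst e3 < b \<and> b < snd e3"
    using f in_G(2,3)[OF gap(2)] in_G(2,3)[OF gap(3)] \<open>a \<noteq> b\<close> e(2-5) by (elim disjE) auto
  then show False
  proof
    assume "fst e2 < a \<and> a < snd e2"
    then have "X a \<in> open_span e2" using in_G(4)[OF gap(2)] by (simp add: open_span_def)
    moreover have "a \<in> {fst e1, snd e1}" "a \<in> {fst e3, snd e3}" using f e(2,4) by auto
    ultimately show False
      using no_pinch[OF in_G(1)[OF gap(1)] in_G(1)[OF gap(2)] in_G(1)[OF gap(3)] _ sorted(1,2)]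
        span[OF gap(1)] span[OF gap(2)] span[OF gap(3)] by blast
  next
    assume "fst e3 < b \<and> b < snd e3"
    then have "X b \<in> open_span e3" using in_G(4)[OF gap(3)] by (simp add: open_span_def)
    moreover have "b \<in> {fst e2, snd e2}" "b \<in> {fst e4, snd e4}" using f e(3,5) by auto
    ultimately show False
      using no_pinch[OF in_G(1)[OF gap(2)] in_G(1)[OF gap(3)] in_G(1)[OF gap(4)] _ sorted(2,3)]
        span[OF gap(2)] span[OF gap(3)] span[OF gap(4)] by blast
  qed
qed

definition level :: "nat \<Rightarrow> nat \<times> nat \<Rightarrow> nat" where
  "level k e = (if k = fst e \<or> k = snd e then 1 else if ht e (X k) < Y k then 0 else 2)"

lemma level_order:
  assumes g: "Suc g < n" "g \<le> k" "k \<le> Suc g"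
    and ab: "a \<in> gap_edges g" "b \<in> gap_edges g" "level k a < level k b"
  shows "ht a (tau g) < ht b (tau g)"
proof -
  have edge: "edge e" "X k \<in> span e" if "e \<in> gap_edges g" for e
    using that g G_edge[of e] by (auto simp: gap_edges_def edge_def span_def)
  have ht_k: "ht e (X k) = Y k \<longleftrightarrow> k = fst e \<or> k = snd e" if "e \<in> gap_edges g" for e
    using ht_fst[OF edge(1)[OF that]] ht_snd[OF edge(1)[OF that]]
      vertex_off_line[OF edge(1)[OF that], of k] g(1,3) by auto
  have "ht a (X k) < ht b (X k)"
    using ab(3) ht_k[OF ab(1)] ht_k[OF ab(2)] by (auto simp: level_def split: if_splits)
  then show ?thesis
    using height_order_strict[of a b "X k" "tau g"] ab(1,2) edge tau_in_open_span[OF g(1)]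
    by (auto simp: gap_edges_def)
qed

lemma gap_list_levels:
  assumes "Suc g < n" "g \<le> k" "k \<le> Suc g"
  shows "gap_list g = filter (\<lambda>e. level k e = 0) (gap_list g) @ filter (\<lambda>e. level k e = 1) (gap_list g)
    @ filter (\<lambda>e. level k e = 2) (gap_list g)"
  by (rule sorted_wrt_key_levels[OF sorted_gap_list[OF assms(1)]])
    (auto simp: level_def set_gap_list intro: level_order[OF assms])

lemma passing_edges_order:
  assumes k: "0 < k" "Suc k < n"
    and ab: "a \<in> G" "b \<in> G" "fst a < k" "k < snd a" "fst b < k" "k < snd b"
  shows "ht a (tau (k - 1)) < ht b (tau (k - 1)) \<longleftrightarrow> ht a (tau k) < ht b (tau k)"
proof -
  have "a \<in> gap_edges (k - 1)" "b \<in> gap_edges (k - 1)" "a \<in> gap_edges k" "b \<in> gap_edges k"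
    using ab by (auto simp: gap_edges_def)
  then have open_spans: "tau (k - 1) \<in> open_span a \<inter> open_span b" "tau k \<in> open_span a \<inter> open_span b"
    using k tau_in_open_span[of "k - 1" a] tau_in_open_span[of "k - 1" b]
      tau_in_open_span[of k a] tau_in_open_span[of k b] by auto
  then have spans: "tau (k - 1) \<in> span a \<inter> span b" "tau k \<in> span a \<inter> span b"
    by (auto simp: span_def open_span_def)
  show ?thesis
    using height_order_strict[OF ab(1,2) spans(1) open_spans(2)]
      height_order_strict[OF ab(1,2) spans(2) open_spans(1)] by blast
qed

lemma side_parts_agree:
  assumes k: "0 < k" "Suc k < n" and l: "l \<noteq> 1"
  shows "filter (\<lambda>e. level k e = l) (gap_list (k - 1)) = filter (\<lambda>e. level k e = l) (gap_list k)"
proof (rule sorted_wrt_key_unique[where h = "\<lambda>e. ht e (tau k)"])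
  have passing: "{e \<in> gap_edges g. level k e = l} = {e \<in> G. fst e < k \<and> k < snd e \<and> level k e = l}"
    if "g \<in> {k - 1, k}" for g
    using that l k by (auto simp: gap_edges_def level_def)
  show "set (filter (\<lambda>e. level k e = l) (gap_list (k - 1))) = set (filter (\<lambda>e. level k e = l) (gap_list k))"
    using passing[of "k - 1"] passing[of k] by (simp add: set_gap_list Collect_conj_eq Int_commute)
  show "sorted_wrt (\<lambda>a b. ht a (tau k) < ht b (tau k)) (filter (\<lambda>e. level k e = l) (gap_list k))"
    using sorted_gap_list[OF k(2)] by (rule sorted_wrt_filter)
  have "sorted_wrt (\<lambda>a b. ht a (tau (k - 1)) < ht b (tau (k - 1))) (filter (\<lambda>e. level k e = l) (gap_list (k - 1)))"
    using sorted_gap_list[of "k - 1"] k by (intro sorted_wrt_filter) simp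
  then show "sorted_wrt (\<lambda>a b. ht a (tau k) < ht b (tau k)) (filter (\<lambda>e. level k e = l) (gap_list (k - 1)))"
  proof (rule sorted_wrt_mono_rel[rotated])
    fix a b assume "a \<in> set (filter (\<lambda>e. level k e = l) (gap_list (k - 1)))"
      "b \<in> set (filter (\<lambda>e. level k e = l) (gap_list (k - 1)))" "ht a (tau (k - 1)) < ht b (tau (k - 1))"
    then show "ht a (tau k) < ht b (tau k)"
      using passing[of "k - 1"] passing_edges_order[OF k, of a b] by (auto simp: set_gap_list)
  qed
qed

lemma gap_lists_at_vertex:
  assumes k: "0 < k" "Suc k < n"
  obtains B A Out m where
    "map snd (gap_list (k - 1)) = B @ replicate m k @ A"
    "map snd (gap_list k) = B @ Out @ A"
    "distinct Out" "length Out = out_degree k"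
    "(\<forall>e\<in>G. fst e < k \<longrightarrow> k < snd e \<longrightarrow> ht e (X k) < Y k) \<Longrightarrow> A = []"
proof -
  define part where "part l g = filter (\<lambda>e. level k e = l) (gap_list g)" for l g
  have before: "gap_list (k - 1) = part 0 (k - 1) @ part 1 (k - 1) @ part 2 (k - 1)"
    using gap_list_levels[of "k - 1" k] k unfolding part_def by simp
  have after: "gap_list k = part 0 (k - 1) @ part 1 k @ part 2 (k - 1)"
    using gap_list_levels[of k k] side_parts_agree[OF k, of 0] side_parts_agree[OF k, of 2] k
    unfolding part_def by simp
  have ends: "map snd (part 1 (k - 1)) = replicate (length (part 1 (k - 1))) k"
    by (rule replicate_eqI) (use k in \<open>auto simp: part_def level_def set_gap_list gap_edges_def split: if_splits\<close>)
  have starts: "set (part 1 k) = {e \<in> G. fst e = k}"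
    by (auto simp: part_def level_def set_gap_list gap_edges_def dest: G_fst_less_snd)
  have "distinct (part 1 k)" by (simp add: part_def distinct_gap_list)
  moreover have "inj_on snd (set (part 1 k))" unfolding starts by (auto simp: inj_on_def prod_eq_iff)
  ultimately have "distinct (map snd (part 1 k))" "length (map snd (part 1 k)) = out_degree k"
    by (simp_all add: distinct_map out_degree_def flip: starts distinct_card)
  moreover have "map snd (gap_list (k - 1)) = map snd (part 0 (k - 1)) @ replicate (length (part 1 (k - 1))) k @ map snd (part 2 (k - 1))"
    by (subst before) (simp only: map_append ends)
  moreover have "map snd (gap_list k) = map snd (part 0 (k - 1)) @ map snd (part 1 k) @ map snd (part 2 (k - 1))"
    by (subst after) simp
  moreover have "map snd (part 2 (k - 1)) = []" if above: "\<forall>e\<in>G. fst e < k \<longrightarrow> k < snd e \<longrightarrow> ht e (X k) < Y k"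
  proof -
    have "level k e \<noteq> 2" if "e \<in> gap_edges (k - 1)" for e
      using that above k by (auto simp: level_def gap_edges_def)
    then show ?thesis by (auto simp: part_def filter_empty_conv set_gap_list)
  qed
  ultimately show thesis
    using that[where B = "map snd (part 0 (k - 1))" and A = "map snd (part 2 (k - 1))"
      and Out = "map snd (part 1 k)"] by blast
qed

lemma changes_gap_lists_at_vertex:
  assumes "0 < k" "Suc k < n"
  shows "changes (map snd (gap_list (k - 1))) + out_degree k \<le> changes (map snd (gap_list k)) + 3"
proof -
  obtain B A Out m where "map snd (gap_list (k - 1)) = B @ replicate m k @ A"
    "map snd (gap_list k) = B @ Out @ A" "distinct Out" "length Out = out_degree k"
    using gap_lists_at_vertex[OF assms] by metis
  then show ?thesis using changes_replace_block[of Out B m k A] by simp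
qed

lemma changes_gap_lists_at_vertex_above:
  assumes "0 < k" "Suc k < n" "\<forall>e\<in>G. fst e < k \<longrightarrow> k < snd e \<longrightarrow> ht e (X k) < Y k"
  shows "changes (map snd (gap_list (k - 1))) + out_degree k \<le> changes (map snd (gap_list k)) + 2"
proof -
  obtain B Out m where "map snd (gap_list (k - 1)) = B @ replicate m k"
    "map snd (gap_list k) = B @ Out" "distinct Out" "length Out = out_degree k"
    using gap_lists_at_vertex[OF assms(1,2)] assms(3) by (metis append_Nil2)
  then show ?thesis using changes_replace_final_block[of Out B m k] by simp
qed

end

context noncrossing_sweep
begin

lemma changes_gap_list_le:
  assumes "Suc g < n" "f = fst \<or> f = snd" "f ` gap_edges g \<subseteq> V" "finite V" "V \<noteq> {}"
  shows "changes (map f (gap_list g)) + 2 \<le> 2 * card V"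
proof (cases "gap_list g = []")
  case True
  have "card V > 0" using assms(4,5) card_gt_0_iff by blast
  then show ?thesis using True by simp
next
  case False
  have "card (set (map f (gap_list g))) \<le> card V"
    using assms(3,4) by (intro card_mono) (auto simp: set_gap_list)
  then show ?thesis
    using abab_free_changes[OF abab_free_gap_list[OF assms(1,2)]] False by simp
qed

lemma changes_telescope:
  assumes "0 < x" "x + d + 1 < n"
    and above: "\<forall>e\<in>G. fst e < x \<longrightarrow> x < snd e \<longrightarrow> ht e (X x) < Y x"
  shows "(\<Sum>k\<in>{x..x + d}. out_degree k) + changes (map snd (gap_list (x - 1))) + 1
    \<le> changes (map snd (gap_list (x + d))) + 3 * (d + 1)"
  using assms(2)
proof (induction d)
  case 0
  then show ?case using changes_gap_lists_at_vertex_above[of x] assms(1) above by simp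
next
  case (Suc d)
  then show ?case using changes_gap_lists_at_vertex[of "Suc (x + d)"] by simp
qed

lemma card_middle_edges:
  assumes "1 \<le> x" "2 * x + 1 \<le> n"
  shows "card {e \<in> G. x \<le> snd e \<and> fst e < n - x} = card (gap_edges (x - 1)) + (\<Sum>k\<in>{x..n - x - 1}. out_degree k)"
proof -
  have "{e \<in> G. x \<le> snd e \<and> fst e < n - x} = gap_edges (x - 1) \<union> (\<Union>k\<in>{x..n - x - 1}. {e \<in> G. fst e = k})"
    using assms by (auto simp: gap_edges_def dest: G_fst_less_snd)
  moreover have "gap_edges (x - 1) \<inter> (\<Union>k\<in>{x..n - x - 1}. {e \<in> G. fst e = k}) = {}"
    using assms by (auto simp: gap_edges_def)
  moreover have "finite (gap_edges (x - 1))" "\<And>k. finite {e \<in> G. fst e = k}"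
    using finite_G by (auto simp: gap_edges_def)
  moreover have "card (\<Union>k\<in>{x..n - x - 1}. {e \<in> G. fst e = k}) = (\<Sum>k\<in>{x..n - x - 1}. out_degree k)"
    unfolding out_degree_def by (rule card_UN_disjoint) (use finite_G in auto)
  ultimately show ?thesis by (simp add: card_Un_disjoint)
qed

theorem middle_edges_bound:
  assumes x: "1 \<le> x" "2 * x + 1 \<le> n" and highest: "\<forall>m<n. m \<noteq> x \<longrightarrow> Y m < Y x"
  shows "card {e \<in> G. x \<le> snd e \<and> fst e < n - x} + 2 * x + 4 \<le> 3 * n"
proof -
  define d where "d = n - 2 * x - 1"
  have d: "x + d = n - x - 1" "x + d + 1 < n" "d + 1 = n - 2 * x" using x by (auto simp: d_def)
  have "\<forall>e\<in>G. fst e < x \<longrightarrow> x < snd e \<longrightarrow> ht e (X x) < Y x"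
    using below_highest_vertex[OF G_edge _ _ highest] by blast
  then have sweep: "(\<Sum>k\<in>{x..n - x - 1}. out_degree k) + changes (map snd (gap_list (x - 1))) + 1
      \<le> changes (map snd (gap_list (n - x - 1))) + 3 * (n - 2 * x)"
    using changes_telescope[of x d] x d by simp
  have left: "card (gap_edges (x - 1)) \<le> 1 + changes (map fst (gap_list (x - 1))) + changes (map snd (gap_list (x - 1)))"
    using length_le_changes_fst_snd[OF distinct_gap_list] by (simp add: length_gap_list)
  have "changes (map fst (gap_list (x - 1))) + 2 \<le> 2 * card {..<x}"
    using x by (intro changes_gap_list_le) (auto simp: gap_edges_def lessThan_empty_iff)
  moreover have "changes (map snd (gap_list (n - x - 1))) + 2 \<le> 2 * card {n - x..<n}"
    using x by (intro changes_gap_list_le) (auto simp: gap_edges_def dest: G_snd_less)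
  moreover have "card {..<x} = x" "card {n - x..<n} = x" "3 * (n - 2 * x) + 6 * x = 3 * n"
    using x by simp_all
  ultimately show ?thesis
    using card_middle_edges[OF x(1,2)] sweep left by linarith
qed

end

context sweep_frame
begin

lemma tau_between: "Suc g < n \<Longrightarrow> X g < tau g \<and> tau g < X (Suc g)"
  by (simp add: tau_def)

lemma ht_interpolation:
  assumes "X i \<noteq> X j"
  shows "ht (i, j) t = (A + B * t) + (Y i - (A + B * X i)) * ((X j - t) / (X j - X i))
    + (Y j - (A + B * X j)) * ((t - X i) / (X j - X i))"
  using assms by (simp add: ht_def lam_def divide_simps) (simp add: algebra_simps)

definition hull_edge :: "real \<Rightarrow> nat \<times> nat \<Rightarrow> bool" where
  "hull_edge s e \<longleftrightarrow> edge e \<and> (\<forall>m<n. m \<noteq> fst e \<longrightarrow> m \<noteq> snd e \<longrightarrow> s * (Y m - ht e (X m)) < 0)"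

text \<open>Among the edges of the complete graph over the gap after vertex g, one extremal in direction s
  at the abscissa tau g is a hull edge: otherwise replacing an endpoint by a vertex beyond its line
  would give a more extreme edge.\<close>
lemma hull_edgeD:
  assumes "hull_edge s e"
  shows "edge e" and "\<And>m. m < n \<Longrightarrow> m \<noteq> fst e \<Longrightarrow> m \<noteq> snd e \<Longrightarrow> s * (Y m - ht e (X m)) < 0"
  using assms by (auto simp: hull_edge_def)

lemma hull_edge_exists:
  assumes g: "Suc g < n" and s: "s \<noteq> 0"
  shows "\<exists>e. hull_edge s e \<and> fst e \<le> g \<and> g < snd e"
proof -
  define C where "C = {e. edge e \<and> fst e \<le> g \<and> g < snd e}"
  define t where "t = tau g"
  have "finite C" by (rule finite_subset[of _ "{..<n} \<times> {..<n}"]) (auto simp: C_def edge_def)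
  moreover have "(g, Suc g) \<in> C" using g by (simp add: C_def edge_def)
  ultimately obtain e where e: "e \<in> C" "s * ht e t = Max ((\<lambda>e. s * ht e t) ` C)"
    using Max_in[of "(\<lambda>e. s * ht e t) ` C"] by fastforce
  have extremal: "s * ht e' t \<le> s * ht e t" if "e' \<in> C" for e'
    using Max_ge[OF finite_imageI[OF \<open>finite C\<close>] imageI[OF that]] e(2) by simp
  have ee: "edge e" "fst e \<le> g" "g < snd e" using e(1) by (auto simp: C_def)
  obtain A B where AB: "\<forall>t. ht e t = A + B * t" using ht_affine by blast
  have Y_ends: "Y (fst e) = A + B * X (fst e)" "Y (snd e) = A + B * X (snd e)"
    using ht_fst[OF ee(1)] ht_snd[OF ee(1)] AB by metis+
  have "X (fst e) \<le> X g" "X (Suc g) \<le> X (snd e)" using ee g by (simp_all add: edge_def)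
  then have t: "X (fst e) < t" "t < X (snd e)" using tau_between[OF g] by (simp_all add: t_def)
  have "s * (Y m - ht e (X m)) < 0" if m: "m < n" "m \<noteq> fst e" "m \<noteq> snd e" for m
  proof (rule ccontr)
    define D where "D = Y m - ht e (X m)"
    assume "\<not> s * (Y m - ht e (X m)) < 0"
    then have "s * D \<ge> 0" by (simp add: D_def)
    moreover have "s * D \<noteq> 0" using vertex_off_line[OF ee(1) m] s by (simp add: D_def)
    ultimately have sD: "s * D > 0" by (simp only: less_le) simp
    have Ym: "Y m = A + B * X m + D" using AB by (simp add: D_def)
    show False
    proof (cases "m \<le> g")
      case True
      then have "X m \<le> X g" using g by simp
      then have "X m < t" using tau_between[OF g] by (simp add: t_def)
      then have "ht (m, snd e) t = ht e t + D * ((X (snd e) - t) / (X (snd e) - X m))"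
        using ht_interpolation[of m "snd e" t A B] AB Ym Y_ends t by simp
      moreover have "s * (D * ((X (snd e) - t) / (X (snd e) - X m))) > 0"
        using sD \<open>X m < t\<close> t by (simp add: mult.assoc[symmetric] zero_less_mult_iff)
      moreover have "(m, snd e) \<in> C" using True ee m by (simp add: C_def edge_def)
      ultimately show False using extremal by (fastforce simp: distrib_left)
    next
      case False
      then have "X (Suc g) \<le> X m" using m by simp
      then have "t < X m" using tau_between[OF g] by (simp add: t_def)
      then have "ht (fst e, m) t = ht e t + D * ((t - X (fst e)) / (X m - X (fst e)))"
        using ht_interpolation[of "fst e" m t A B] AB Ym Y_ends t by simp
      moreover have "s * (D * ((t - X (fst e)) / (X m - X (fst e)))) > 0"
        using sD \<open>t < X m\<close> t by (simp add: mult.assoc[symmetric] zero_less_mult_iff)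
      moreover have "(fst e, m) \<in> C" using False ee m by (simp add: C_def edge_def)
      ultimately show False using extremal by (fastforce simp: distrib_left)
    qed
  qed
  then have "hull_edge s e" using ee(1) by (simp add: hull_edge_def)
  then show ?thesis using ee(2,3) by blast
qed

text \<open>The signed distance phi from the line of a hull edge is affine, vanishes on the edge and is
  negative at all other vertices, so a segment between two vertices can only meet the edge at one
  of its endpoints.\<close>
lemma hull_edge_noncrossing:
  assumes hull: "hull_edge s (i, j)" and ab: "a < n" "b < n" "a \<noteq> b" "{a, b} \<noteq> {i, j}"
  shows "closed_segment (P a) (P b) \<inter> closed_segment (P i) (P j) \<subseteq> P ` ({a, b} \<inter> {i, j})"
proof
  fix z assume "z \<in> closed_segment (P a) (P b) \<inter> closed_segment (P i) (P j)"
  then have z: "z \<in> closed_segment (P a) (P b)" "z \<in> closed_segment (P i) (P j)" by auto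
  have e: "edge (i, j)" using hull by (rule hull_edgeD)
  obtain A B where AB: "\<forall>t. ht (i, j) t = A + B * t" using ht_affine by blast
  define phi where "phi y = s * (w \<bullet> y - A - B * (u \<bullet> y))" for y
  have phi_affine: "phi ((1 - mu) *\<^sub>R p + mu *\<^sub>R q) = (1 - mu) * phi p + mu * phi q" for mu p q
    by (simp add: phi_def inner_add_right algebra_simps)
  have phi_P: "phi (P m) = s * (Y m - ht (i, j) (X m))" for m
    using AB by (simp add: phi_def X_def Y_def)
  have phi_ends: "phi (P i) = 0" "phi (P j) = 0"
    using phi_P ht_fst[OF e] ht_snd[OF e] by auto
  have phi_neg: "phi (P m) < 0" if "m < n" "m \<notin> {i, j}" for m
    using hull_edgeD(2)[OF hull, of m] that phi_P by auto
  have phi_le: "phi (P m) \<le> 0" if "m < n" for m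
    using phi_neg[OF that] phi_ends by (cases "m \<in> {i, j}") auto
  obtain nu where "0 \<le> nu" "nu \<le> 1" "z = (1 - nu) *\<^sub>R P i + nu *\<^sub>R P j"
    using z(2) unfolding in_segment by blast
  then have "phi z = 0" using phi_affine phi_ends by simp
  obtain mu where mu: "0 \<le> mu" "mu \<le> 1" "z = (1 - mu) *\<^sub>R P a + mu *\<^sub>R P b"
    using z(1) unfolding in_segment by blast
  have "(1 - mu) * phi (P a) + mu * phi (P b) = 0" using \<open>phi z = 0\<close> mu phi_affine by simp
  moreover have "(1 - mu) * phi (P a) \<le> 0" "mu * phi (P b) \<le> 0"
    using mu phi_le ab by (simp_all add: mult_nonneg_nonpos)
  ultimately have zero: "(1 - mu) * phi (P a) = 0" "mu * phi (P b) = 0" by linarith+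
  consider "a \<notin> {i, j}" | "b \<notin> {i, j}" using ab(3,4) by auto
  then show "z \<in> P ` ({a, b} \<inter> {i, j})"
  proof cases
    case 1
    then have "mu = 1" using zero(1) phi_neg[OF ab(1)] by simp
    then have "b \<in> {i, j}" using zero(2) phi_neg[OF ab(2)] by auto
    then show ?thesis using mu(3) \<open>mu = 1\<close> by simp
  next
    case 2
    then have "mu = 0" using zero(2) phi_neg[OF ab(2)] by simp
    then have "a \<in> {i, j}" using zero(1) phi_neg[OF ab(1)] by auto
    then show ?thesis using mu(3) \<open>mu = 0\<close> by simp
  qed
qed

lemma noncrossing_Un_hull_edges:
  assumes "noncrossing G" "\<forall>e\<in>H. \<exists>s. hull_edge s e"
  shows "noncrossing (G \<union> H)"
proof -
  have edges: "\<forall>e\<in>G \<union> H. edge e" using assms hull_edgeD(1) by (auto simp: noncrossing_def)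
  have meet: "closed_segment (P i) (P j) \<inter> closed_segment (P i') (P j') \<subseteq> P ` ({i, j} \<inter> {i', j'})"
    if ij: "(i, j) \<in> G \<union> H" "(i', j') \<in> G \<union> H" "(i, j) \<noteq> (i', j')" for i j i' j'
  proof -
    have "edge (i, j)" "edge (i', j')" using edges ij by auto
    then have nn: "i < n" "j < n" "i \<noteq> j" "i' < n" "j' < n" "i' \<noteq> j'" "{i, j} \<noteq> {i', j'}"
      using ij(3) by (auto simp: edge_def doubleton_eq_iff)
    consider "(i', j') \<in> H" | "(i, j) \<in> H" | "(i, j) \<in> G" "(i', j') \<in> G" using ij by auto
    then show ?thesis
    proof cases
      case 1
      then obtain s where "hull_edge s (i', j')" using assms(2) by blast
      then show ?thesis by (rule hull_edge_noncrossing) (use nn in auto)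
    next
      case 2
      then obtain s where "hull_edge s (i, j)" using assms(2) by blast
      then have "closed_segment (P i') (P j') \<inter> closed_segment (P i) (P j) \<subseteq> P ` ({i', j'} \<inter> {i, j})"
        by (rule hull_edge_noncrossing) (use nn in auto)
      then show ?thesis by (simp add: Int_commute)
    next
      case 3
      then show ?thesis using assms(1) ij(3) unfolding noncrossing_def by blast
    qed
  qed
  show ?thesis unfolding noncrossing_def using edges meet by blast
qed

end

lemma card_eq_sum_card_fibres:
  assumes "finite A" "\<forall>a\<in>A. f a < (k::nat)"
  shows "card A = (\<Sum>l<k. card {a \<in> A. f a = l})"
proof -
  have "f ` A \<subseteq> {..<k}" using assms(2) by auto
  then show ?thesis using sum.group[of A "{..<k}" f "\<lambda>_. 1 :: nat"] assms(1) by simp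
qed

context sweep_frame
begin

lemma three_hull_edges:
  assumes x: "1 \<le> x" "2 * x + 1 \<le> n" and highest: "\<forall>m<n. m \<noteq> x \<longrightarrow> Y m < Y x"
  obtains H where "card H = 3" "\<forall>e\<in>H. \<exists>s. hull_edge s e" "\<forall>e\<in>H. x \<le> snd e \<and> fst e < n - x"
proof -
  have gaps: "Suc (x - 1) < n" "Suc x < n" using x by simp_all
  obtain U where U: "hull_edge 1 U" "fst U \<le> x - 1" "x - 1 < snd U"
    using hull_edge_exists[OF gaps(1), of 1] by auto
  obtain D where D: "hull_edge (-1) D" "fst D \<le> x - 1" "x - 1 < snd D"
    using hull_edge_exists[OF gaps(1), of "-1"] by auto
  obtain E where E: "hull_edge 1 E" "fst E \<le> x" "x < snd E"
    using hull_edge_exists[OF gaps(2), of 1] by auto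
  have "fst E = x"
  proof (rule ccontr)
    assume "fst E \<noteq> x"
    then have "ht E (X x) < Y x"
      using below_highest_vertex[OF hull_edgeD(1)[OF E(1)] _ E(3) highest] E(2) by simp
    moreover have "1 * (Y x - ht E (X x)) < 0"
      using hull_edgeD(2)[OF E(1), of x] \<open>fst E \<noteq> x\<close> E(3) gaps(2) by simp
    ultimately show False by simp
  qed
  have "U \<noteq> D"
  proof
    assume "U = D"
    define m :: nat where "m = (if 0 \<notin> {fst U, snd U} then 0 else if 1 \<notin> {fst U, snd U} then 1 else 2)"
    have m: "m < n" "m \<noteq> fst U" "m \<noteq> snd U" using x by (auto simp: m_def)
    show False
      using hull_edgeD(2)[OF U(1) m] hull_edgeD(2)[OF D(1)] m \<open>U = D\<close> by force
  qed
  moreover have "E \<noteq> U" "E \<noteq> D" using \<open>fst E = x\<close> U(2) D(2) x by auto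
  ultimately have "card {U, D, E} = 3" by (simp add: card_insert_if)
  moreover have "\<forall>e\<in>{U, D, E}. \<exists>s. hull_edge s e" using U(1) D(1) E(1) by blast
  moreover have "x \<le> snd U \<and> fst U < n - x" "x \<le> snd D \<and> fst D < n - x" "x \<le> snd E \<and> fst E < n - x"
    using U(2,3) D(2,3) E(3) \<open>fst E = x\<close> x by linarith+
  ultimately show thesis using that by simp
qed

text \<open>Each layer is completed by the same three hull edges, which cross no edge at all; this is
  where the term 3 in the numerator comes from.\<close>
theorem layered_middle_edges_bound:
  assumes x: "1 \<le> x" "2 * x + 1 \<le> n" and highest: "\<forall>m<n. m \<noteq> x \<longrightarrow> Y m < Y x"
    and layer: "\<forall>e. edge e \<longrightarrow> layer e < k"
    and noncrossing_layers: "\<And>l. noncrossing {e. edge e \<and> layer e = l}"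
  shows "card {e. edge e \<and> x \<le> snd e \<and> fst e < n - x} + k * (2 * x + 7) \<le> 3 * k * n + 3"
proof -
  obtain H where H: "card H = 3" "\<forall>e\<in>H. \<exists>s. hull_edge s e" "\<forall>e\<in>H. x \<le> snd e \<and> fst e < n - x"
    using three_hull_edges[OF x highest] by blast
  define M where "M = {e. edge e \<and> x \<le> snd e \<and> fst e < n - x}"
  have "finite M" by (rule finite_subset[of _ "{..<n} \<times> {..<n}"]) (auto simp: M_def edge_def)
  have "H \<subseteq> M" using H(2,3) by (auto simp: M_def hull_edge_def)
  then have "finite H" using \<open>finite M\<close> finite_subset by blast
  have per_layer: "card {e \<in> M. layer e = l} + (2 * x + 7) \<le> 3 * n + card {e \<in> H. layer e = l}" for l
  proof -
    interpret noncrossing_sweep P n u w "{e. edge e \<and> layer e = l} \<union> H"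
      by unfold_locales (rule noncrossing_Un_hull_edges[OF noncrossing_layers H(2)])
    have "{e \<in> {e. edge e \<and> layer e = l} \<union> H. x \<le> snd e \<and> fst e < n - x} = {e \<in> M. layer e = l} \<union> H"
      using \<open>H \<subseteq> M\<close> H(3) by (auto simp: M_def)
    then have "card ({e \<in> M. layer e = l} \<union> H) + 2 * x + 4 \<le> 3 * n"
      using middle_edges_bound[OF x highest] by simp
    moreover have "{e \<in> M. layer e = l} \<inter> H = {e \<in> H. layer e = l}" using \<open>H \<subseteq> M\<close> by auto
    then have "card {e \<in> M. layer e = l} + card H = card ({e \<in> M. layer e = l} \<union> H) + card {e \<in> H. layer e = l}"
      using card_Un_Int[of "{e \<in> M. layer e = l}" H] \<open>finite M\<close> \<open>finite H\<close> by simp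
    ultimately show ?thesis using H(1) by linarith
  qed
  have "card M = (\<Sum>l<k. card {e \<in> M. layer e = l})"
    using \<open>finite M\<close> layer by (intro card_eq_sum_card_fibres) (auto simp: M_def)
  then have "(\<Sum>l<k. card {e \<in> M. layer e = l} + (2 * x + 7)) = card M + k * (2 * x + 7)"
    by (simp add: sum.distrib)
  moreover have "card H = (\<Sum>l<k. card {e \<in> H. layer e = l})"
    using \<open>finite H\<close> \<open>H \<subseteq> M\<close> layer by (intro card_eq_sum_card_fibres) (auto simp: M_def)
  then have "(\<Sum>l<k. 3 * n + card {e \<in> H. layer e = l}) = 3 * k * n + 3"
    using H(1) by (simp add: sum.distrib)
  moreover have "(\<Sum>l<k. card {e \<in> M. layer e = l} + (2 * x + 7)) \<le> (\<Sum>l<k. 3 * n + card {e \<in> H. layer e = l})"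
    using per_layer by (rule sum_mono)
  ultimately have "card M + k * (2 * x + 7) \<le> 3 * k * n + 3" by linarith
  then show ?thesis unfolding M_def .
qed

end

lemma inner_lt_inner_self_if_norm_le:
  fixes a w :: "'a::real_inner"
  assumes "norm a \<le> norm w" "a \<noteq> w"
  shows "w \<bullet> a < w \<bullet> w"
proof (rule ccontr)
  assume "\<not> w \<bullet> a < w \<bullet> w"
  moreover have "a \<bullet> a \<le> w \<bullet> w" using assms(1) by (simp add: norm_le)
  moreover have "(a - w) \<bullet> (a - w) = a \<bullet> a - 2 * (w \<bullet> a) + w \<bullet> w"
    by (simp add: inner_diff_left inner_diff_right inner_commute)
  ultimately have "(a - w) \<bullet> (a - w) \<le> 0" by simp
  then have "(a - w) \<bullet> (a - w) = 0" using inner_ge_zero[of "a - w"] by linarith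
  then show False using assms(2) by simp
qed

definition perp :: "real^2 \<Rightarrow> real^2" where
  "perp w = vector [- (w $ 2), w $ 1]"

lemma perp_inner_eq_zero:
  assumes "w \<noteq> 0" "perp w \<bullet> d = 0" "w \<bullet> d = 0"
  shows "d = 0"
proof -
  have inner2: "a \<bullet> b = a $ 1 * b $ 1 + a $ 2 * b $ 2" for a b :: "real^2"
    by (simp add: inner_vec_def sum_2)
  have "w $ 1 \<noteq> 0 \<or> w $ 2 \<noteq> 0" using assms(1) by (auto simp: vec_eq_iff forall_2)
  then have pos: "w $ 1 * w $ 1 + w $ 2 * w $ 2 > 0"
    by (metis add_pos_nonneg add_nonneg_pos not_real_square_gt_zero zero_le_square)
  have "(w $ 1 * w $ 1 + w $ 2 * w $ 2) * d $ 1 = w $ 1 * (w \<bullet> d) - w $ 2 * (perp w \<bullet> d)"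
    "(w $ 1 * w $ 1 + w $ 2 * w $ 2) * d $ 2 = w $ 2 * (w \<bullet> d) + w $ 1 * (perp w \<bullet> d)"
    by (simp_all add: inner2 perp_def algebra_simps)
  then have "(w $ 1 * w $ 1 + w $ 2 * w $ 2) * d $ 1 = 0" "(w $ 1 * w $ 1 + w $ 2 * w $ 2) * d $ 2 = 0"
    using assms(2,3) by simp_all
  then have "d $ 1 = 0" "d $ 2 = 0" using pos by (metis less_irrefl mult_eq_0_iff)+
  then show "d = 0" by (simp add: vec_eq_iff forall_2)
qed

lemma extreme_vertex:
  fixes p :: "nat \<Rightarrow> real^2"
  assumes inj: "inj_on p {..<n}" and n: "2 \<le> n"
  obtains c w where "c < n" "w \<noteq> 0" "\<And>m. m < n \<Longrightarrow> m \<noteq> c \<Longrightarrow> w \<bullet> p m < w \<bullet> p c"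
proof -
  have "Max ((\<lambda>m. norm (p m)) ` {..<n}) \<in> (\<lambda>m. norm (p m)) ` {..<n}"
    using n by (intro Max_in) (auto simp: lessThan_empty_iff)
  then obtain c where c: "c < n" "norm (p c) = Max ((\<lambda>m. norm (p m)) ` {..<n})" by auto
  have c_max: "norm (p m) \<le> norm (p c)" if "m < n" for m
    using that unfolding c(2) by (intro Max_ge) auto
  have less: "p c \<bullet> p m < p c \<bullet> p c" if "m < n" "m \<noteq> c" for m
    using inner_lt_inner_self_if_norm_le[OF c_max[OF that(1)]] inj that c(1) by (auto dest: inj_onD)
  moreover have "p c \<noteq> 0"
  proof
    assume "p c = 0"
    define m :: nat where "m = (if c = 0 then 1 else 0)"
    have "m < n" "m \<noteq> c" using n by (auto simp: m_def)
    then have "p c \<bullet> p m < p c \<bullet> p c" by (rule less)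
    with \<open>p c = 0\<close> show False by simp
  qed
  ultimately show thesis using that c(1) by blast
qed

lemma segment_of_parallel_rays:
  fixes dm dq :: "'a::real_vector"
  assumes "0 < am" "am \<le> aq" "aq *\<^sub>R dm = am *\<^sub>R dq"
  shows "c + dm \<in> closed_segment c (c + dq)"
proof -
  define t where "t = am / aq"
  have t: "0 \<le> t" "t \<le> 1" using assms(1,2) by (auto simp: t_def)
  have "dm = (1 / aq) *\<^sub>R (aq *\<^sub>R dm)" using assms(1,2) by simp
  also have "\<dots> = t *\<^sub>R dq" using assms(3) by (simp add: t_def)
  finally have "c + dm = (1 - t) *\<^sub>R c + t *\<^sub>R (c + dq)" by (simp add: algebra_simps)
  then show ?thesis using t unfolding in_segment by blast
qed

text \<open>Seen from the extreme vertex c, all other vertices lie in the open half-plane below c, and no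
  two of them on a common ray from c; hence the slopes of these rays are pairwise distinct.\<close>
lemma ray_slopes_inj:
  fixes p :: "nat \<Rightarrow> real^2"
  assumes nv: "\<And>a b v. a < n \<Longrightarrow> b < n \<Longrightarrow> v < n \<Longrightarrow> a \<noteq> b \<Longrightarrow> v \<noteq> a \<Longrightarrow> v \<noteq> b \<Longrightarrow>
      p v \<notin> closed_segment (p a) (p b)"
    and c: "c < n" and w: "w \<noteq> 0" and top: "\<And>m. m < n \<Longrightarrow> m \<noteq> c \<Longrightarrow> w \<bullet> p m < w \<bullet> p c"
  shows "inj_on (\<lambda>m. (perp w \<bullet> (p m - p c)) / (w \<bullet> (p c - p m))) ({..<n} - {c})"
proof (rule inj_onI, rule ccontr)
  fix m q assume mq: "m \<in> {..<n} - {c}" "q \<in> {..<n} - {c}" "m \<noteq> q"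
    and eq: "(perp w \<bullet> (p m - p c)) / (w \<bullet> (p c - p m)) = (perp w \<bullet> (p q - p c)) / (w \<bullet> (p c - p q))"
  define am aq where "am = w \<bullet> (p c - p m)" and "aq = w \<bullet> (p c - p q)"
  have pos: "0 < am" "0 < aq" using top mq by (auto simp: am_def aq_def inner_diff_right)
  have "aq *\<^sub>R (p m - p c) - am *\<^sub>R (p q - p c) = 0"
  proof (rule perp_inner_eq_zero[OF w])
    show "perp w \<bullet> (aq *\<^sub>R (p m - p c) - am *\<^sub>R (p q - p c)) = 0"
      using eq pos unfolding am_def[symmetric] aq_def[symmetric]
      by (simp add: inner_diff_right inner_add_right field_simps)
    show "w \<bullet> (aq *\<^sub>R (p m - p c) - am *\<^sub>R (p q - p c)) = 0"
      by (simp add: am_def aq_def inner_diff_right algebra_simps)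
  qed
  then have par: "aq *\<^sub>R (p m - p c) = am *\<^sub>R (p q - p c)" by simp
  show False
  proof (cases "am \<le> aq")
    case True
    then have "p c + (p m - p c) \<in> closed_segment (p c) (p c + (p q - p c))"
      using segment_of_parallel_rays[of am aq "p m - p c" "p q - p c" "p c"] pos par by blast
    then show False using nv[of c q m] mq c by auto
  next
    case False
    then have "p c + (p q - p c) \<in> closed_segment (p c) (p c + (p m - p c))"
      using segment_of_parallel_rays[of aq am "p q - p c" "p m - p c" "p c"] pos par by simp
    then show False using nv[of c m q] mq c by auto
  qed
qed

lemma exists_threshold_with_rank:
  fixes f :: "'a \<Rightarrow> real"
  assumes S: "finite S" "inj_on f S" and x: "0 < x" "x < card S" and B: "finite B"
  obtains s where "s \<notin> B" "card {a \<in> S. f a < s} = x"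
proof -
  obtain xs where xs: "set xs = S" "distinct xs" using finite_distinct_list[OF S(1)] by blast
  define ys where "ys = sort_key f xs"
  have ys: "set ys = S" "distinct ys" "length ys = card S" "sorted_wrt (\<lambda>a b. f a < f b) ys"
    using xs S(2) distinct_card[of ys] by (simp_all add: ys_def sorted_wrt_sort_key)
  have "f (ys ! (x - 1)) < f (ys ! x)" using sorted_wrt_nth_less[OF ys(4)] x ys(3) by simp
  then have "infinite ({f (ys ! (x - 1))<..<f (ys ! x)} - B)" using B by (simp add: Diff_infinite_finite)
  then obtain s where s: "s \<in> {f (ys ! (x - 1))<..<f (ys ! x)}" "s \<notin> B"
    using infinite_imp_nonempty by blast
  have below: "f (ys ! j) < s" if "j < x" for j
  proof -
    have "f (ys ! j) \<le> f (ys ! (x - 1))"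
    proof (cases "j = x - 1")
      case False
      then have "j < x - 1" using that by simp
      moreover have "x - 1 < length ys" using x ys(3) by simp
      ultimately show ?thesis using sorted_wrt_nth_less[OF ys(4)] by (simp add: less_imp_le)
    qed simp
    then show ?thesis using s(1) by simp
  qed
  have above: "s < f (ys ! j)" if "x \<le> j" "j < length ys" for j
  proof -
    have "f (ys ! x) \<le> f (ys ! j)"
      using sorted_wrt_nth_less[OF ys(4), of x j] that by (cases "j = x") auto
    then show ?thesis using s(1) by simp
  qed
  have "{a \<in> S. f a < s} = nth ys ` {0..<x}"
  proof (intro set_eqI iffI)
    fix a assume "a \<in> {a \<in> S. f a < s}"
    then obtain j where "j < length ys" "a = ys ! j" "f a < s" using ys(1) by (auto simp: in_set_conv_nth)
    moreover from this have "j < x" using above[of j] by (cases "x \<le> j") auto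
    ultimately show "a \<in> nth ys ` {0..<x}" by simp
  next
    fix a assume "a \<in> nth ys ` {0..<x}"
    then show "a \<in> {a \<in> S. f a < s}" using below ys(1,3) x by auto
  qed
  then have "{a \<in> S. f a < s} = set (take x ys)" using nth_image[of x ys] x ys(3) by simp
  then have "card {a \<in> S. f a < s} = x"
    using distinct_card[of "take x ys"] ys(2,3) x by simp
  then show thesis using that s(2) by blast
qed

lemma exists_sorting_bijection:
  fixes f :: "nat \<Rightarrow> real"
  assumes "inj_on f {..<n}"
  obtains \<pi> where "bij_betw \<pi> {..<n} {..<n}" "strict_mono_on {..<n} (f \<circ> \<pi>)"
    "\<And>c. c < n \<Longrightarrow> \<pi> (card {m \<in> {..<n}. f m < f c}) = c"
proof -
  define ys where "ys = sort_key f [0..<n]"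
  have ys: "set ys = {..<n}" "distinct ys" "length ys = n" "sorted_wrt (\<lambda>a b. f a < f b) ys"
    using assms by (simp_all add: ys_def sorted_wrt_sort_key atLeast0LessThan)
  have "bij_betw (nth ys) {..<n} {..<n}" using bij_betw_nth[OF ys(2)] ys(1,3) by simp
  moreover have "strict_mono_on {..<n} (f \<circ> nth ys)"
    using sorted_wrt_nth_less[OF ys(4)] ys(3) by (auto intro: strict_mono_onI)
  moreover have "ys ! card {m \<in> {..<n}. f m < f c} = c" if "c < n" for c
  proof -
    have "c \<in> set ys" using that ys(1) by simp
    then obtain i where i: "i < n" "ys ! i = c" using ys(3) by (auto simp: in_set_conv_nth)
    then have "{m \<in> {..<n}. f m < f c} = set (take i ys)"
      using sorted_wrt_key_take[OF ys(4)] ys(1,3) by auto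
    then have "card {m \<in> {..<n}. f m < f c} = i" using distinct_card[of "take i ys"] ys(2,3) i(1) by simp
    then show ?thesis using i(2) by simp
  qed
  ultimately show thesis using that by blast
qed

text \<open>The sweep direction u is a perturbation of the direction perpendicular to w, tilted by a
  slope between the x-th and (x + 1)-st ray slope at c, so that exactly x vertices precede c.\<close>
lemma exists_direction_with_rank:
  fixes p :: "nat \<Rightarrow> real^2"
  assumes inj: "inj_on p {..<n}"
    and nv: "\<And>a b v. a < n \<Longrightarrow> b < n \<Longrightarrow> v < n \<Longrightarrow> a \<noteq> b \<Longrightarrow> v \<noteq> a \<Longrightarrow> v \<noteq> b \<Longrightarrow>
      p v \<notin> closed_segment (p a) (p b)"
    and c: "c < n" and w: "w \<noteq> 0" and top: "\<And>m. m < n \<Longrightarrow> m \<noteq> c \<Longrightarrow> w \<bullet> p m < w \<bullet> p c"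
    and x: "0 < x" "x + 1 < n"
  obtains u where "inj_on (\<lambda>m. u \<bullet> p m) {..<n}" "\<And>z z'. u \<bullet> z = u \<bullet> z' \<Longrightarrow> w \<bullet> z = w \<bullet> z' \<Longrightarrow> z = z'"
    "card {m \<in> {..<n}. u \<bullet> p m < u \<bullet> p c} = x"
proof -
  define slope where "slope m = (perp w \<bullet> (p m - p c)) / (w \<bullet> (p c - p m))" for m
  define B where "B = (\<lambda>(m, q). - (perp w \<bullet> (p m - p q)) / (w \<bullet> (p m - p q))) ` ({..<n} \<times> {..<n})"
  have "inj_on slope ({..<n} - {c})" unfolding slope_def by (rule ray_slopes_inj[of n p, OF nv c w top])
  moreover have "x < card ({..<n} - {c})" using c x by simp
  moreover have "finite B" by (simp add: B_def)
  ultimately obtain s where s: "s \<notin> B" "card {m \<in> {..<n} - {c}. slope m < s} = x"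
    using exists_threshold_with_rank[of "{..<n} - {c}" slope x B] x(1) by blast
  define u where "u = perp w + s *\<^sub>R w"
  have u_inj: "inj_on (\<lambda>m. u \<bullet> p m) {..<n}"
  proof (rule inj_onI, rule ccontr)
    fix m q assume mq: "m \<in> {..<n}" "q \<in> {..<n}" "u \<bullet> p m = u \<bullet> p q" "m \<noteq> q"
    define d where "d = p m - p q"
    have "d \<noteq> 0" using inj mq by (auto simp: d_def dest: inj_onD)
    have ud: "perp w \<bullet> d + s * (w \<bullet> d) = 0"
      using mq(3) by (simp add: u_def d_def inner_diff_right algebra_simps)
    show False
    proof (cases "w \<bullet> d = 0")
      case True
      then show False using perp_inner_eq_zero[OF w] ud \<open>d \<noteq> 0\<close> by simp
    next
      case False
      then have "s = - (perp w \<bullet> d) / (w \<bullet> d)" using ud by (simp add: field_simps)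
      then have "s = (\<lambda>(m, q). - (perp w \<bullet> (p m - p q)) / (w \<bullet> (p m - p q))) (m, q)"
        by (simp add: d_def)
      then have "s \<in> B" unfolding B_def by (rule image_eqI) (use mq(1,2) in simp)
      then show False using s(1) by simp
    qed
  qed
  have coordinates: "z = z'" if "u \<bullet> z = u \<bullet> z'" "w \<bullet> z = w \<bullet> z'" for z z'
    using perp_inner_eq_zero[OF w, of "z - z'"] that by (simp add: u_def inner_diff_right algebra_simps)
  have "u \<bullet> p m < u \<bullet> p c \<longleftrightarrow> slope m < s" if "m < n" "m \<noteq> c" for m
  proof -
    define a where "a = w \<bullet> (p c - p m)"
    have pos: "a > 0" using top that by (simp add: a_def inner_diff_right)
    then have "a * slope m = perp w \<bullet> (p m - p c)" by (simp add: slope_def a_def)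
    moreover have "u \<bullet> p m - u \<bullet> p c = perp w \<bullet> (p m - p c) - s * a"
      by (simp add: u_def a_def inner_add_left inner_diff_right algebra_simps)
    ultimately have diff: "u \<bullet> p m - u \<bullet> p c = a * (slope m - s)" by (simp add: right_diff_distrib)
    have "u \<bullet> p m < u \<bullet> p c \<longleftrightarrow> u \<bullet> p m - u \<bullet> p c < 0" by (rule diff_less_0_iff_less[symmetric])
    also have "\<dots> \<longleftrightarrow> a * (slope m - s) < 0" unfolding diff ..
    also have "\<dots> \<longleftrightarrow> slope m < s" using pos by (simp add: mult_less_0_iff)
    finally show ?thesis .
  qed
  then have "{m \<in> {..<n}. u \<bullet> p m < u \<bullet> p c} = {m \<in> {..<n} - {c}. slope m < s}" by auto
  then show thesis using that u_inj coordinates s(2) by simp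
qed

theorem exists_sweep_frame:
  fixes p :: "nat \<Rightarrow> real^2"
  assumes inj: "inj_on p {..<n}"
    and nv: "\<And>a b v. a < n \<Longrightarrow> b < n \<Longrightarrow> v < n \<Longrightarrow> a \<noteq> b \<Longrightarrow> v \<noteq> a \<Longrightarrow> v \<noteq> b \<Longrightarrow>
      p v \<notin> closed_segment (p a) (p b)"
    and x: "0 < x" "x + 1 < n"
  obtains \<pi> u w where "bij_betw \<pi> {..<n} {..<n}" "sweep_frame (p \<circ> \<pi>) n u w"
    "\<forall>m<n. m \<noteq> x \<longrightarrow> w \<bullet> p (\<pi> m) < w \<bullet> p (\<pi> x)"
proof -
  have "2 \<le> n" using x by simp
  then obtain c w where c: "c < n" and w: "w \<noteq> 0" and top: "\<And>m. m < n \<Longrightarrow> m \<noteq> c \<Longrightarrow> w \<bullet> p m < w \<bullet> p c"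
    using extreme_vertex[OF inj] by blast
  obtain u where u_inj: "inj_on (\<lambda>m. u \<bullet> p m) {..<n}"
    and coordinates: "\<And>z z'. u \<bullet> z = u \<bullet> z' \<Longrightarrow> w \<bullet> z = w \<bullet> z' \<Longrightarrow> z = z'"
    and rank: "card {m \<in> {..<n}. u \<bullet> p m < u \<bullet> p c} = x"
    using exists_direction_with_rank[OF inj nv c w top x] by blast
  obtain \<pi> where \<pi>: "bij_betw \<pi> {..<n} {..<n}" "strict_mono_on {..<n} ((\<lambda>m. u \<bullet> p m) \<circ> \<pi>)"
    and \<pi>_rank: "\<And>c. c < n \<Longrightarrow> \<pi> (card {m \<in> {..<n}. u \<bullet> p m < u \<bullet> p c}) = c"
    using exists_sorting_bijection[OF u_inj] by blast
  have "\<pi> x = c" using \<pi>_rank[OF c] rank by simp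
  have \<pi>_inj: "\<pi> i = \<pi> j \<longleftrightarrow> i = j" and \<pi>_less: "\<pi> i < n" if "i < n" "j < n" for i j
    using \<pi>(1) that by (auto simp: bij_betw_def inj_on_eq_iff)
  have "sweep_frame (p \<circ> \<pi>) n u w"
  proof
    show "strict_mono_on {..<n} (\<lambda>i. u \<bullet> (p \<circ> \<pi>) i)" using \<pi>(2) by (simp add: comp_def)
    show "z = z'" if "u \<bullet> z = u \<bullet> z'" "w \<bullet> z = w \<bullet> z'" for z z' using coordinates that .
    fix i j m assume ijm: "i < n" "j < n" "m < n" "m \<noteq> i" "m \<noteq> j"
    show "(p \<circ> \<pi>) m \<notin> closed_segment ((p \<circ> \<pi>) i) ((p \<circ> \<pi>) j)"
    proof (cases "i = j")
      case True
      then show ?thesis using inj ijm \<pi>_inj \<pi>_less by (auto dest: inj_onD)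
    next
      case False
      then show ?thesis using nv[of "\<pi> i" "\<pi> j" "\<pi> m"] ijm \<pi>_inj \<pi>_less by auto
    qed
  qed
  moreover have "\<forall>m<n. m \<noteq> x \<longrightarrow> w \<bullet> p (\<pi> m) < w \<bullet> p (\<pi> x)"
  proof (intro allI impI)
    fix m assume "m < n" "m \<noteq> x"
    moreover have "x < n" using x by simp
    ultimately have "\<pi> m \<noteq> c" "\<pi> m < n" using \<pi>_inj \<pi>_less \<open>\<pi> x = c\<close> by metis+
    then show "w \<bullet> p (\<pi> m) < w \<bullet> p (\<pi> x)" using top \<open>\<pi> x = c\<close> by simp
  qed
  ultimately show thesis using that \<pi>(1) by blast
qed

lemma real_choose_two: "real (m choose 2) = real m * (real m - 1) / 2"
  by (induction m) (simp_all add: numeral_2_eq_2 field_simps)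

lemma card_ordered_pairs: "card {e :: nat \<times> nat. fst e < snd e \<and> snd e < m} = m choose 2"
proof (induction m)
  case (Suc m)
  have "{e :: nat \<times> nat. fst e < snd e \<and> snd e < Suc m} =
      {e. fst e < snd e \<and> snd e < m} \<union> (\<lambda>i. (i, m)) ` {..<m}"
    by (auto simp: less_Suc_eq)
  moreover have "finite {e :: nat \<times> nat. fst e < snd e \<and> snd e < m}"
    by (rule finite_subset[of _ "{..<m} \<times> {..<m}"]) auto
  moreover have "card ((\<lambda>i. (i, m)) ` {..<m}) = m" by (simp add: card_image inj_on_def)
  moreover have "{e :: nat \<times> nat. fst e < snd e \<and> snd e < m} \<inter> (\<lambda>i. (i, m)) ` {..<m} = {}" by auto
  ultimately show ?case using Suc by (simp add: card_Un_disjoint numeral_2_eq_2)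
qed simp

lemma card_middle_pairs:
  assumes "2 * x \<le> n"
  shows "card {e :: nat \<times> nat. fst e < snd e \<and> snd e < n \<and> x \<le> snd e \<and> fst e < n - x}
    + 2 * (x choose 2) = n choose 2"
proof -
  define Lo where "Lo = {e :: nat \<times> nat. fst e < snd e \<and> snd e < x}"
  define Hi where "Hi = {e :: nat \<times> nat. n - x \<le> fst e \<and> fst e < snd e \<and> snd e < n}"
  define M where "M = {e :: nat \<times> nat. fst e < snd e \<and> snd e < n \<and> x \<le> snd e \<and> fst e < n - x}"
  have "Hi = (\<lambda>e. (fst e + (n - x), snd e + (n - x))) ` Lo"
  proof (intro set_eqI iffI)
    fix e assume "e \<in> Hi"
    then have "(fst e - (n - x), snd e - (n - x)) \<in> Lo" "e = (fst e - (n - x) + (n - x), snd e - (n - x) + (n - x))"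
      using assms by (auto simp: Hi_def Lo_def)
    then show "e \<in> (\<lambda>e. (fst e + (n - x), snd e + (n - x))) ` Lo" by force
  qed (use assms in \<open>auto simp: Hi_def Lo_def\<close>)
  then have "card Hi = card Lo" by (simp add: card_image inj_on_def prod_eq_iff)
  moreover have "card Lo = x choose 2" using card_ordered_pairs by (simp add: Lo_def)
  moreover have split: "{e :: nat \<times> nat. fst e < snd e \<and> snd e < n} = M \<union> (Lo \<union> Hi)"
    "M \<inter> (Lo \<union> Hi) = {}" "Lo \<inter> Hi = {}"
    using assms by (auto simp: M_def Lo_def Hi_def)
  moreover have "finite {e :: nat \<times> nat. fst e < snd e \<and> snd e < n}"
    by (rule finite_subset[of _ "{..<n} \<times> {..<n}"]) auto
  then have "finite M" "finite Lo" "finite Hi" unfolding split(1) by simp_all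
  ultimately show ?thesis
    using card_ordered_pairs[of n] by (simp add: card_Un_disjoint M_def)
qed

lemma geometric_drawing_complete_graphE:
  assumes "geometric_drawing {..<n} (complete_graph_edges n) k"
  obtains p :: "nat \<Rightarrow> real^2" and layer :: "nat set \<Rightarrow> nat" where
    "inj_on p {..<n}"
    "\<And>a b v. a < n \<Longrightarrow> b < n \<Longrightarrow> v < n \<Longrightarrow> a \<noteq> b \<Longrightarrow> v \<noteq> a \<Longrightarrow> v \<noteq> b \<Longrightarrow>
      p v \<notin> closed_segment (p a) (p b)"
    "\<And>a b. a < n \<Longrightarrow> b < n \<Longrightarrow> a \<noteq> b \<Longrightarrow> layer {a, b} < k"
    "\<And>a b a' b'. a < n \<Longrightarrow> b < n \<Longrightarrow> a \<noteq> b \<Longrightarrow> a' < n \<Longrightarrow> b' < n \<Longrightarrow> a' \<noteq> b' \<Longrightarrow>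
      {a, b} \<noteq> {a', b'} \<Longrightarrow> layer {a, b} = layer {a', b'} \<Longrightarrow>
      closed_segment (p a) (p b) \<inter> closed_segment (p a') (p b') \<subseteq> p ` ({a, b} \<inter> {a', b'})"
proof -
  have edge: "{a, b} \<in> complete_graph_edges n" if "a < n" "b < n" "a \<noteq> b" for a b
    using that by (auto simp: complete_graph_edges_def)
  obtain p :: "nat \<Rightarrow> real^2" and layer where inj: "inj_on p {..<n}"
    and nv: "\<forall>a b v. {a, b} \<in> complete_graph_edges n \<longrightarrow> v \<in> {..<n} \<longrightarrow> v \<noteq> a \<longrightarrow> v \<noteq> b \<longrightarrow>
       p v \<notin> closed_segment (p a) (p b)"
    and bound: "\<forall>e\<in>complete_graph_edges n. layer e < k"
    and layers: "\<forall>a b a' b'. {a, b} \<in> complete_graph_edges n \<longrightarrow> {a', b'} \<in> complete_graph_edges n \<longrightarrow>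
       {a, b} \<noteq> {a', b'} \<longrightarrow> layer {a, b} = layer {a', b'} \<longrightarrow>
       closed_segment (p a) (p b) \<inter> closed_segment (p a') (p b') \<subseteq> p ` ({a, b} \<inter> {a', b'})"
    using assms unfolding geometric_drawing_def by (elim exE conjE) (rule that)
  show thesis
  proof (rule that[OF inj])
    fix a b v assume "a < n" "b < n" "v < n" "a \<noteq> b" "v \<noteq> a" "v \<noteq> b"
    then show "p v \<notin> closed_segment (p a) (p b)" using nv edge[of a b] by simp
  next
    fix a b assume "a < n" "b < n" "a \<noteq> b"
    then show "layer {a, b} < k" using bound edge[of a b] by simp
  next
    fix a b a' b' assume "a < n" "b < n" "a \<noteq> b" "a' < n" "b' < n" "a' \<noteq> b'"
      "{a, b} \<noteq> {a', b'}" "layer {a, b} = layer {a', b'}"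
    then show "closed_segment (p a) (p b) \<inter> closed_segment (p a') (p b') \<subseteq> p ` ({a, b} \<inter> {a', b'})"
      using layers edge[of a b] edge[of a' b'] by simp
  qed
qed

theorem complete_graph_drawing_bound:
  assumes drawing: "geometric_drawing {..<n} (complete_graph_edges n) k" and x: "1 \<le> x" "2 * x + 1 \<le> n"
  shows "(n choose 2) + k * (2 * x + 7) \<le> 3 * k * n + 3 + 2 * (x choose 2)"
proof -
  obtain p :: "nat \<Rightarrow> real^2" and layer where inj: "inj_on p {..<n}"
    and nv: "\<And>a b v. a < n \<Longrightarrow> b < n \<Longrightarrow> v < n \<Longrightarrow> a \<noteq> b \<Longrightarrow> v \<noteq> a \<Longrightarrow> v \<noteq> b \<Longrightarrow>
      p v \<notin> closed_segment (p a) (p b)"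
    and layer_bound: "\<And>a b. a < n \<Longrightarrow> b < n \<Longrightarrow> a \<noteq> b \<Longrightarrow> layer {a, b} < k"
    and noncrossing_layers: "\<And>a b a' b'. a < n \<Longrightarrow> b < n \<Longrightarrow> a \<noteq> b \<Longrightarrow> a' < n \<Longrightarrow> b' < n \<Longrightarrow> a' \<noteq> b' \<Longrightarrow>
      {a, b} \<noteq> {a', b'} \<Longrightarrow> layer {a, b} = layer {a', b'} \<Longrightarrow>
      closed_segment (p a) (p b) \<inter> closed_segment (p a') (p b') \<subseteq> p ` ({a, b} \<inter> {a', b'})"
    by (rule geometric_drawing_complete_graphE[OF drawing]) (rule that)
  have x': "0 < x" "x + 1 < n" using x by simp_all
  obtain \<pi> u w where \<pi>: "bij_betw \<pi> {..<n} {..<n}" and frame: "sweep_frame (p \<circ> \<pi>) n u w"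
    and highest: "\<forall>m<n. m \<noteq> x \<longrightarrow> w \<bullet> p (\<pi> m) < w \<bullet> p (\<pi> x)"
    using exists_sweep_frame[OF inj nv x'] by blast
  interpret sweep_frame "p \<circ> \<pi>" n u w by (rule frame)
  have \<pi>_inj: "\<pi> i = \<pi> j \<longleftrightarrow> i = j" if "i < n" "j < n" for i j
    using \<pi> that by (auto simp: bij_betw_def inj_on_eq_iff)
  have \<pi>_less: "\<pi> i < n" if "i < n" for i
    using \<pi> that by (auto simp: bij_betw_def)
  define pair_layer where "pair_layer e = layer {\<pi> (fst e), \<pi> (snd e)}" for e
  have "noncrossing {e. edge e \<and> pair_layer e = l}" for l
    unfolding noncrossing_def
  proof (intro conjI ballI allI impI)
    fix i j i' j' assume ij: "(i, j) \<in> {e. edge e \<and> pair_layer e = l}" "(i', j') \<in> {e. edge e \<and> pair_layer e = l}" "(i, j) \<noteq> (i', j')"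
    then have n: "i < n" "j < n" "i < j" "i' < n" "j' < n" "i' < j'" by (auto simp: edge_def)
    have "{i, j} \<noteq> {i', j'}" using ij(3) n by (auto simp: doubleton_eq_iff)
    then have "{\<pi> i, \<pi> j} \<noteq> {\<pi> i', \<pi> j'}" using n \<pi>_inj by (auto simp: doubleton_eq_iff)
    then have "closed_segment (p (\<pi> i)) (p (\<pi> j)) \<inter> closed_segment (p (\<pi> i')) (p (\<pi> j')) \<subseteq> p ` ({\<pi> i, \<pi> j} \<inter> {\<pi> i', \<pi> j'})"
      using noncrossing_layers[of "\<pi> i" "\<pi> j" "\<pi> i'" "\<pi> j'"] ij(1,2) n \<pi>_inj \<pi>_less by (simp add: pair_layer_def)
    moreover have "{\<pi> i, \<pi> j} \<inter> {\<pi> i', \<pi> j'} = \<pi> ` ({i, j} \<inter> {i', j'})" using n \<pi>_inj by auto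
    ultimately show "closed_segment ((p \<circ> \<pi>) i) ((p \<circ> \<pi>) j) \<inter> closed_segment ((p \<circ> \<pi>) i') ((p \<circ> \<pi>) j')
        \<subseteq> (p \<circ> \<pi>) ` ({i, j} \<inter> {i', j'})" by (simp add: image_comp)
  qed simp
  moreover have "\<forall>e. edge e \<longrightarrow> pair_layer e < k"
  proof (intro allI impI)
    fix e assume "edge e"
    then have "fst e < n" "snd e < n" "fst e \<noteq> snd e" by (auto simp: edge_def)
    then show "pair_layer e < k"
      using layer_bound[of "\<pi> (fst e)" "\<pi> (snd e)"] \<pi>_inj \<pi>_less by (simp add: pair_layer_def)
  qed
  moreover have "\<forall>m<n. m \<noteq> x \<longrightarrow> Y m < Y x" using highest by (simp add: Y_def)
  ultimately have "card {e. edge e \<and> x \<le> snd e \<and> fst e < n - x} + k * (2 * x + 7) \<le> 3 * k * n + 3"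
    using layered_middle_edges_bound[OF x] by blast
  moreover have "card {e. edge e \<and> x \<le> snd e \<and> fst e < n - x} + 2 * (x choose 2) = n choose 2"
    using card_middle_pairs[of x n] x by (simp add: edge_def conj_assoc)
  ultimately show ?thesis by linarith
qed

definition parabola_point :: "nat \<Rightarrow> real^2" where
  "parabola_point i = vector [real i, real i ^ 2]"

lemma parabola_point_not_on_segment:
  assumes "a \<noteq> b" "v \<noteq> a" "v \<noteq> b"
  shows "parabola_point v \<notin> closed_segment (parabola_point a) (parabola_point b)"
proof
  assume "parabola_point v \<in> closed_segment (parabola_point a) (parabola_point b)"
  then obtain mu where mu: "0 \<le> mu" "mu \<le> 1"
    "parabola_point v = (1 - mu) *\<^sub>R parabola_point a + mu *\<^sub>R parabola_point b"
    unfolding in_segment by blast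
  have v: "real v = (1 - mu) * real a + mu * real b" "real v ^ 2 = (1 - mu) * real a ^ 2 + mu * real b ^ 2"
    using arg_cong[OF mu(3), of "\<lambda>z. z $ 1"] arg_cong[OF mu(3), of "\<lambda>z. z $ 2"]
    by (simp_all add: parabola_point_def)
  have "mu * (1 - mu) * (real a - real b) ^ 2
      = (1 - mu) * real a ^ 2 + mu * real b ^ 2 - ((1 - mu) * real a + mu * real b) ^ 2"
    by (simp add: power2_eq_square algebra_simps)
  then have "mu * (1 - mu) * (real a - real b) ^ 2 = 0" using v by simp
  then have "mu = 0 \<or> mu = 1" using assms(1) by simp
  then show False using v(1) assms by auto
qed

text \<open>Every edge in its own layer: the thickness is well defined.\<close>
lemma complete_graph_drawing_exists: "\<exists>k. geometric_drawing {..<n} (complete_graph_edges n) k"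
proof (intro exI)
  define layer where "layer e = Max e * n + Min e" for e :: "nat set"
  have edge: "{a, b} \<in> complete_graph_edges n \<Longrightarrow> a \<noteq> b \<and> a < n \<and> b < n" for a b
    by (auto simp: complete_graph_edges_def doubleton_eq_iff)
  have layer_pair: "layer {a, b} = max a b * n + min a b" for a b by (simp add: layer_def)
  have layer_inj: "{a, b} = {a', b'}" if "layer {a, b} = layer {a', b'}" "a < n" "b < n" "a' < n" "b' < n"
    for a b a' b'
  proof -
    have eq: "max a b * n + min a b = max a' b' * n + min a' b'" using that(1) by (simp add: layer_pair)
    have lt: "min a b < n" "min a' b' < n" using that by (simp_all add: min_less_iff_disj)
    have "min a b = min a' b'" using arg_cong[OF eq, of "\<lambda>t. t mod n"] lt by simp
    moreover from this have "max a b = max a' b'" using eq lt by simp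
    ultimately show ?thesis by (auto simp: min_def max_def split: if_splits)
  qed
  show "geometric_drawing {..<n} (complete_graph_edges n) (n * n)"
    unfolding geometric_drawing_def
  proof (intro exI[of _ parabola_point] exI[of _ layer] conjI allI impI ballI)
    show "inj_on parabola_point {..<n}" by (rule inj_onI) (simp add: parabola_point_def vec_eq_iff forall_2)
  next
    fix a b v assume "{a, b} \<in> complete_graph_edges n" "v \<noteq> a" "v \<noteq> b"
    then show "parabola_point v \<notin> closed_segment (parabola_point a) (parabola_point b)"
      using edge parabola_point_not_on_segment by blast
  next
    fix e assume "e \<in> complete_graph_edges n"
    then obtain a b where ab: "e = {a, b}" "a < n" "b < n" by (auto simp: complete_graph_edges_def)
    then have "max a b \<le> n - 1" "min a b \<le> n - 1" by auto
    then have "layer {a, b} \<le> (n - 1) * n + (n - 1)"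
      unfolding layer_pair by (intro add_mono mult_right_mono) auto
    also have "\<dots> < n * n" using ab(2) by (cases n) (auto simp: algebra_simps)
    finally show "layer e < n * n" using ab(1) by simp
  next
    fix a b a' b' assume "{a, b} \<in> complete_graph_edges n" "{a', b'} \<in> complete_graph_edges n"
      "{a, b} \<noteq> {a', b'}" "layer {a, b} = layer {a', b'}"
    then show "closed_segment (parabola_point a) (parabola_point b) \<inter>
      closed_segment (parabola_point a') (parabola_point b') \<subseteq> parabola_point ` ({a, b} \<inter> {a', b'})"
      using edge layer_inj by blast
  qed
qed

lemma thickness_K_drawing: "geometric_drawing {..<n} (complete_graph_edges n) (thickness_K n)"
  unfolding thickness_K_def geometric_thickness_def
  using complete_graph_drawing_exists by (rule LeastI_ex)

lemma thickness_K_lower_bound_odd_part: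
  assumes x: "1 \<le> x" "2 * x + 1 \<le> n"
  shows "(real (n choose 2) - 2 * real (x choose 2) - 3) / (3 * real n - 2 * real x - 7) \<le> real (thickness_K n)"
proof -
  have "(n choose 2) + thickness_K n * (2 * x + 7) \<le> 3 * thickness_K n * n + 3 + 2 * (x choose 2)"
    by (rule complete_graph_drawing_bound[OF thickness_K_drawing x])
  then have "real (n choose 2) + real (thickness_K n) * (2 * real x + 7)
      \<le> 3 * real (thickness_K n) * real n + 3 + 2 * real (x choose 2)"
    by (metis (mono_tags) of_nat_le_iff of_nat_add of_nat_mult of_nat_numeral)
  then have "real (n choose 2) - 2 * real (x choose 2) - 3 \<le> real (thickness_K n) * (3 * real n - 2 * real x - 7)"
    by (simp add: algebra_simps)
  moreover have "3 * real n - 2 * real x - 7 \<ge> 0" using x by linarith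
  ultimately show ?thesis by (auto simp: divide_le_eq)
qed

text \<open>For n = 2x the bound is implied by the one for x - 1.\<close>
lemma thickness_K_lower_bound:
  assumes n: "4 \<le> n" and x: "1 \<le> x" "2 * x \<le> n"
  shows "(real (n choose 2) - 2 * real (x choose 2) - 3) / (3 * real n - 2 * real x - 7) \<le> real (thickness_K n)"
proof (cases "2 * x + 1 \<le> n")
  case True
  then show ?thesis using thickness_K_lower_bound_odd_part[OF x(1)] by simp
next
  case False
  then have n: "n = 2 * x" and x2: "2 \<le> x" using x n by simp_all
  define r where "r = real x"
  have r: "real (x - 1) = r - 1" "real n = 2 * r" "2 \<le> r" using x2 by (simp_all add: r_def n)
  have "0 \<le> (r - 2) * (3 * r - 5)" using r(3) by simp
  then have "(r * r - 3) * (4 * r - 5) \<le> (r * r + 2 * r - 5) * (4 * r - 7)" by (simp add: algebra_simps)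
  then have ineq: "(r * r - 3) / (4 * r - 7) \<le> (r * r + 2 * r - 5) / (4 * r - 5)"
    using r(3) by (simp add: divide_simps)
  have eqs: "real (n choose 2) - 2 * real (x choose 2) - 3 = r * r - 3"
    "3 * real n - 2 * real x - 7 = 4 * r - 7"
    "real (n choose 2) - 2 * real ((x - 1) choose 2) - 3 = r * r + 2 * r - 5"
    "3 * real n - 2 * real (x - 1) - 7 = 4 * r - 5"
    unfolding real_choose_two r(1,2) r_def[symmetric] by (simp_all add: field_simps)
  have "(real (n choose 2) - 2 * real (x choose 2) - 3) / (3 * real n - 2 * real x - 7)
      \<le> (real (n choose 2) - 2 * real ((x - 1) choose 2) - 3) / (3 * real n - 2 * real (x - 1) - 7)"
    unfolding eqs by (rule ineq)
  also have "\<dots> \<le> real (thickness_K n)"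
    using thickness_K_lower_bound_odd_part[of "x - 1" n] x2 n by simp
  finally show ?thesis .
qed

lemma sqrt_7_bounds: "2.644 < sqrt 7" "sqrt 7 < 2.64576"
proof -
  have "sqrt (2.644 ^ 2) < sqrt 7" "sqrt 7 < sqrt (2.64576 ^ 2)"
    by (simp_all only: real_sqrt_less_iff) (simp_all add: power2_eq_square)
  then show "2.644 < sqrt 7" "sqrt 7 < 2.64576" by simp_all
qed

text \<open>Where the constant comes from: with alpha = (3 - sqrt 7) / 2 the root of
  2 alpha^2 - 6 alpha + 1 = 0 and x = alpha n + d, the quadratic terms in n cancel.\<close>
lemma sqrt_7_identity:
  fixes s n d c :: real
  assumes s: "s * s = 7"
  defines "alpha \<equiv> (3 - s) / 2"
  shows "n * (n - 1) / 2 - (alpha * n + d) * (alpha * n + d - 1) - 3 - (alpha * n + c) * (3 * n - 2 * (alpha * n + d) - 7)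
       = (23 / 2 - (4 + c) * s) * n + (- d * d + (1 + 2 * c) * d - 3 + 7 * c)"
proof -
  have a2: "alpha * alpha = 4 - 3 / 2 * s" using s by (simp add: alpha_def field_simps)
  have "n * (n - 1) / 2 - (alpha * n + d) * (alpha * n + d - 1) - 3 - (alpha * n + c) * (3 * n - 2 * (alpha * n + d) - 7)
      = n * n * (1 / 2 + alpha * alpha - 3 * alpha) + n * (- 1 / 2 + 8 * alpha - 3 * c + 2 * c * alpha)
        + (- d * d + d - 3 + 2 * c * d + 7 * c)"
    by (simp add: field_simps)
  also have "1 / 2 + alpha * alpha - 3 * alpha = 0" using a2 by (simp add: alpha_def field_simps)
  also have "- 1 / 2 + 8 * alpha - 3 * c + 2 * c * alpha = 23 / 2 - (4 + c) * s" by (simp add: alpha_def field_simps)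
  finally show ?thesis by (simp add: algebra_simps)
qed

lemma linear_choice_of_x:
  fixes n :: nat
  assumes n: "13 \<le> n"
  defines "alpha \<equiv> (3 - sqrt 7) / 2"
  defines "x \<equiv> nat \<lfloor>alpha * real n + 1.342\<rfloor>"
  shows "1 \<le> x" "2 * x \<le> n"
    and "alpha * real n + 0.342 \<le> (real n * (real n - 1) / 2 - real x * (real x - 1) - 3) / (3 * real n - 2 * real x - 7)"
proof -
  have alpha: "0.17712 < alpha" "alpha < 0.178" using sqrt_7_bounds by (simp_all add: alpha_def field_simps)
  then have "0 \<le> alpha * real n + 1.342" by simp
  then have x: "real x \<le> alpha * real n + 1.342" "alpha * real n + 0.342 < real x"
    unfolding x_def by (simp_all add: of_nat_nat) linarith+
  have "alpha \<le> 89 / 500" using alpha by simp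
  then have "alpha * real n \<le> 89 / 500 * real n" by (intro mult_right_mono) auto
  moreover have "real x \<le> alpha * real n + 671 / 500" "alpha * real n + 171 / 500 < real x"
    using x by simp_all
  moreover have "0 \<le> alpha * real n" "13 \<le> real n" using alpha n by simp_all
  ultimately have "2 * real x \<le> real n" "0 < real x" by linarith+
  then show x_n: "1 \<le> x" "2 * x \<le> n" by simp_all
  define d where "d = real x - alpha * real n"
  have d: "0.342 < d" "d \<le> 1.342" using x by (simp_all add: d_def)
  have "- d * d + (1 + 2 * 0.342) * d - 3 + 7 * 0.342 = (d - 0.342) * (1.342 - d) - (0.147036 :: real)"
    by (simp add: field_simps)
  moreover have "0 \<le> (d - 0.342) * (1.342 - d)" using d by simp
  moreover have "0.0115 \<le> 23 / 2 - (4 + 0.342) * sqrt 7" using sqrt_7_bounds(2) by (simp add: field_simps)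
  then have "0.0115 * 13 \<le> (23 / 2 - (4 + 0.342) * sqrt 7) * real n"
    using n by (intro mult_mono) auto
  moreover have "real x = alpha * real n + d" by (simp add: d_def)
  ultimately have "0 \<le> real n * (real n - 1) / 2 - real x * (real x - 1) - 3 - (alpha * real n + 0.342) * (3 * real n - 2 * real x - 7)"
    using sqrt_7_identity[of "sqrt 7" "real n" d "0.342"] unfolding alpha_def by simp
  moreover have "3 * real n - 2 * real x - 7 > 0" using x_n n by linarith
  ultimately show "alpha * real n + 0.342 \<le> (real n * (real n - 1) / 2 - real x * (real x - 1) - 3) / (3 * real n - 2 * real x - 7)"
    by (simp add: pos_le_divide_eq)
qed
lemma thickness_K_linear_bound:
  assumes n: "12 \<le> n"
  shows "(3 - sqrt 7) / 2 * real n + 0.342 \<le> real (thickness_K n)"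
proof (cases "n = 12")
  case True
  have "(3 - sqrt 7) / 2 * real n + 0.342 \<le> 57 / 23"
    using True sqrt_7_bounds(1) by (simp add: field_simps)
  also have "\<dots> = (real (n choose 2) - 2 * real (3 choose 2) - 3) / (3 * real n - 2 * real (3::nat) - 7)"
    using True by (simp add: real_choose_two)
  also have "\<dots> \<le> real (thickness_K n)" using thickness_K_lower_bound[of n 3] True by simp
  finally show ?thesis .
next
  case False
  then have "13 \<le> n" using n by simp
  define x where "x = nat \<lfloor>(3 - sqrt 7) / 2 * real n + 1.342\<rfloor>"
  have x: "1 \<le> x" "2 * x \<le> n"
    using linear_choice_of_x[OF \<open>13 \<le> n\<close>] unfolding x_def by simp_all
  have "(3 - sqrt 7) / 2 * real n + 0.342
      \<le> (real n * (real n - 1) / 2 - real x * (real x - 1) - 3) / (3 * real n - 2 * real x - 7)"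
    using linear_choice_of_x[OF \<open>13 \<le> n\<close>] unfolding x_def by simp_all
  also have "\<dots> = (real (n choose 2) - 2 * real (x choose 2) - 3) / (3 * real n - 2 * real x - 7)"
    by (simp add: real_choose_two)
  also have "\<dots> \<le> real (thickness_K n)" using thickness_K_lower_bound[OF _ x] n by simp
  finally show ?thesis .
qed

theorem theorem3p1:
  shows "(\<forall>n::nat. n \<ge> 4 \<longrightarrow>
           real (thickness_K n) \<ge>
             Max ((\<lambda>x::nat. (real (n choose 2) - 2 * real (x choose 2) - 3)
                             / (3 * real n - 2 * real x - 7)) ` {x. 1 \<le> x \<and> real x \<le> real n / 2}))
       \<and> (\<forall>n::nat. n \<ge> 12 \<longrightarrow>
           int (thickness_K n) \<ge> \<lceil>(3 - sqrt 7) / 2 * real n + 0.342\<rceil> \<and>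
           \<lceil>(3 - sqrt 7) / 2 * real n + 0.342\<rceil> \<ge> \<lceil>real n / 5.646 + 0.342\<rceil>)"
proof (intro conjI allI impI)
  fix n :: nat assume "n \<ge> 4"
  have "{x. 1 \<le> x \<and> real x \<le> real n / 2} = {x. 1 \<le> x \<and> 2 * x \<le> n}" by auto
  moreover have "finite {x. 1 \<le> x \<and> 2 * x \<le> n}" by (rule finite_subset[of _ "{..n}"]) auto
  moreover have "1 \<in> {x. 1 \<le> x \<and> 2 * x \<le> n}" using \<open>n \<ge> 4\<close> by simp
  ultimately show "Max ((\<lambda>x. (real (n choose 2) - 2 * real (x choose 2) - 3) / (3 * real n - 2 * real x - 7))
      ` {x. 1 \<le> x \<and> real x \<le> real n / 2}) \<le> real (thickness_K n)"
    using thickness_K_lower_bound[OF \<open>n \<ge> 4\<close>] by (subst Max_le_iff) auto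
next
  fix n :: nat assume "n \<ge> 12"
  then show "\<lceil>(3 - sqrt 7) / 2 * real n + 0.342\<rceil> \<le> int (thickness_K n)"
    using thickness_K_linear_bound by (simp add: ceiling_le_iff)
  have "1 / 5.646 \<le> (3 - sqrt 7) / 2" using sqrt_7_bounds(2) by (simp add: field_simps)
  then have "1 / 5.646 * real n \<le> (3 - sqrt 7) / 2 * real n" by (intro mult_right_mono) auto
  then show "\<lceil>real n / 5.646 + 0.342\<rceil> \<le> \<lceil>(3 - sqrt 7) / 2 * real n + 0.342\<rceil>"
    by (intro ceiling_mono) simp
qed

end
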